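(* Let $\Lambda$ be a commutative $\mathbb Q$-algebra with an element $\ell$ such that $\ell$ and $\ell^k-1$ are invertible for all $k\ge1$, let $K(\mathcal A)$ and $C(\mathcal A)$ be as in the context, and let $\chi:K(\mathcal A)\times K(\mathcal A)\to\mathbb Z$ be biadditive. For finite sets $I,J,K$ and maps $\kappa:I\to C(\mathcal A)$, $\lambda:J\to C(\mathcal A)$, $\mu:K\to C(\mathcal A)$, the following two elements of $\Lambda$ are equal: $$\frac{(\ell-1)^{|K|-|I|-|J|}}{|\mathrm{Aut}(K,\mu)|}\sum_{n\ge0}\frac{(-1)^{n-|K|}}{n!}\!\!\!\sum_{\substack{\phi:I\to L,\ \psi:J\to L,\ \theta:L\to K:\\ \phi\amalg\psi\text{ surjective},\\ \mu(k)=\kappa((\theta\circ\phi)^{-1}(k))+\lambda((\theta\circ\psi)^{-1}(k))\ \forall k\in K}}\ \prod_{k\in K}(|\theta^{-1}(k)|-1)!\prod_{\substack{i\in I,\,j\in J:\\ \phi(i)=\psi(j)}}\ell^{-\chi(\lambda(j),\kappa(i))},$$ where $L=\{1,\dots,n\}$, and $$\frac{1}{|\mathrm{Aut}(K,\mu)|}\sum_{\substack{\eta:I\to K,\ \zeta:J\to K:\\ \mu(k)=\kappa(\eta^{-1}(k))+\lambda(\zeta^{-1}(k))\ \forall k}}\ \sum_{\Gamma}(\ell-1)^{b_1(\Gamma)}\prod_{\text{edges }i\to j\text{ of }\Gamma}\frac{\ell^{-\chi(\lambda(j),\kappa(i))}-1}{\ell-1},$$ where $\Gamma$ runs over directed graphs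 with vertex set $I\amalg J$, all of whose edges are of the form $i\to j$ with $i\in I$, $j\in J$, with at most one edge between any two vertices, and whose connected components are exactly the sets $\eta^{-1}(k)\amalg\zeta^{-1}(k)$ for $k\in K$; $b_1(\Gamma)$ is the first Betti number of $\Gamma$. Consequently the multiplication on $B(\mathcal A,\Lambda,\chi)$ defined by $b_{[I,\kappa]}\star b_{[J,\lambda]}=\sum_{[K,\mu]}(\text{first expression})\,b_{[K,\mu]}$ coincides with the one given by $b_{[I,\kappa]}\star b_{[J,\lambda]}=\sum_{[K,\mu]}(\text{second expression})\,b_{[K,\mu]}$.
   Context: $\mathcal A$ is an abelian category and $K(\mathcal A)$ a quotient of $K_0(\mathcal A)$ such that $[X]=0$ in $K(\mathcal A)$ implies $X\cong0$; $C(\mathcal A)=\{[X]:X\in\mathcal A,\ X\not\cong0\}\subseteq K(\mathcal A)$. For a subset $S$ of a domain of $\kappa$, $\kappa(S)=\sum_{s\in S}\kappa(s)$ (so $\kappa(\emptyset)=0$). $\mathrm{Aut}(K,\mu)$ is the group of bijections $\iota:K\to K$ with $\mu\circ\iota=\mu$. Pairs $(I,\kappa)$, $\kappa:I\to C(\mathcal A)$ with $I$ finite, are equivalent if related by a bijection of index sets compatible with the maps; $[I,\kappa]$ denotes the class, and $B(\mathcal A,\Lambda,\chi)$ is the free $\Lambda$-module with basis symbols $b_{[I,\kappa]}$, the product being extended $\Lambda$-bilinearly (the coefficients above depend only on the classes). *)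

theory Defs
  imports Main "HOL-Library.FuncSet"
begin

text \<open>Multiplicative inverse in a commutative ring (meaningful for units).\<close>
definition rinv :: "'a::comm_ring_1 \<Rightarrow> 'a" where
  "rinv x = (SOME y. x * y = 1)"

definition ipow :: "'a::comm_ring_1 \<Rightarrow> int \<Rightarrow> 'a" where
  "ipow x z = (if 0 \<le> z then x ^ nat z else rinv x ^ nat (- z))"

definition fsum :: "(nat \<Rightarrow> 'a::comm_monoid_add) \<Rightarrow> 'a" where
  "fsum f = sum f {n. f n \<noteq> 0}"

definition aut_card :: "'c set \<Rightarrow> ('c \<Rightarrow> 'g) \<Rightarrow> nat" where
  "aut_card K mu = card {\<iota> \<in> K \<rightarrow>\<^sub>E K. bij_betw \<iota> K K \<and> (\<forall>k\<in>K. mu (\<iota> k) = mu k)}"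

text \<open>Underlying undirected adjacency of a directed graph on vertex set I \<amalg> J whose edges
  i \<rightarrow> j (i \<in> I, j \<in> J) are given by E \<subseteq> I \<times> J.\<close>
definition bip_adj :: "('i \<times> 'j) set \<Rightarrow> ('i + 'j) \<Rightarrow> ('i + 'j) \<Rightarrow> bool" where
  "bip_adj E u v \<longleftrightarrow> (\<exists>i j. (i, j) \<in> E \<and> ((u = Inl i \<and> v = Inr j) \<or> (u = Inr j \<and> v = Inl i)))"

definition graph_components :: "'i set \<Rightarrow> 'j set \<Rightarrow> ('i \<times> 'j) set \<Rightarrow> ('i + 'j) set set" where
  "graph_components I J E =
     (\<lambda>v. {w \<in> I <+> J. (bip_adj E)\<^sup>*\<^sup>* v w}) ` (I <+> J)"

definition betti1 :: "'i set \<Rightarrow> 'j set \<Rightarrow> ('i \<times> 'j) set \<Rightarrow> int" where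
  "betti1 I J E = int (card E) - int (card I + card J) + int (card (graph_components I J E))"

end

(* Write w = l^(-chi(lam j, kappa i)) and expand every factor w = 1 + (w - 1) of the first
   expression over the coincident pairs phi i = psi j.  Both expressions then become sums over
   edge sets E of I x J weighted by the product of (w - 1) over E, and it suffices to compare the
   coefficients.  On the second side b_1 - |E| = |K| - |I| - |J| once the components of E are the
   fibres of (eta, zeta), so the coefficient counts the pairs (eta, zeta) whose fibres are exactly
   the components of E.  On the first side, a triple (phi, psi, theta) gluing the endpoints of all
   edges of E amounts to a map h from the components of E to K together with a surjection g from
   the components onto L = {1..n} with theta o g = h.  For fixed h, the exponential formula turns
   the alternating sum over n into a product over k in K of sums
   sum_m (-1)^(m+1) (m-1)! S_k(m) / m!, with S_k(m) the number of surjections from the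
   components over k onto an m-set; these telescope to 1 if h^-1(k) is a single component and
   to 0 otherwise.  So only injective h contribute, and they correspond to the pairs counted on
   the second side. *)

theory Submission
  imports Defs "HOL-Combinatorics.Stirling"
begin

section \<open>Units and integer powers\<close>

lemma rinv_unit:
  fixes u :: "'a::comm_ring_1"
  assumes "u dvd 1"
  shows "u * rinv u = 1"
proof -
  from assms obtain v where "u * v = 1" by (auto elim: dvdE)
  then show ?thesis unfolding rinv_def by (rule someI)
qed

lemma rinv_eq:
  fixes u v :: "'a::comm_ring_1"
  assumes "u * v = 1"
  shows "rinv u = v"
proof -
  have "u * rinv u = 1" using assms by (intro rinv_unit dvdI) (simp add: mult.commute)
  then have "v * (u * rinv u) = v" by simp
  then show ?thesis using assms by (simp add: mult.assoc[symmetric] mult.commute)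
qed

lemma rinv_mult:
  fixes u v :: "'a::comm_ring_1"
  assumes "u dvd 1" "v dvd 1"
  shows "rinv (u * v) = rinv u * rinv v"
  using rinv_unit[OF assms(1)] rinv_unit[OF assms(2)] by (intro rinv_eq) (simp add: algebra_simps)

lemma ipow_diff_of_nat:
  fixes u :: "'a::comm_ring_1"
  assumes "u dvd 1"
  shows "ipow u (z - int e) = ipow u z * rinv u ^ e"
proof (induction e)
  case 0
  then show ?case by simp
next
  case (Suc e)
  have "ipow u (w - 1) = ipow u w * rinv u" for w
  proof (cases "w \<ge> 1")
    case True
    then have "nat w = Suc (nat (w - 1))" by simp
    then have "u ^ nat w * rinv u = u ^ nat (w - 1) * (u * rinv u)" by (simp add: algebra_simps)
    then show ?thesis using True rinv_unit[OF assms] unfolding ipow_def by simp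
  next
    case False
    then have "nat (- (w - 1)) = Suc (nat (- w))" by simp
    then show ?thesis using False unfolding ipow_def by (simp add: mult.commute)
  qed
  from this[of "z - int e"] show ?case using Suc by (simp add: algebra_simps)
qed

lemma ipow_minus_one:
  "ipow (-1::'a::comm_ring_1) (int n - int k) = (-1) ^ (n + k)"
proof (cases "k \<le> n")
  case True
  then have "n + k = nat (int n - int k) + 2 * k" by simp
  then have "(-1::'a) ^ (n + k) = (-1) ^ nat (int n - int k)"
    by (simp only: power_add power_mult) simp
  then show ?thesis using True unfolding ipow_def by simp
next
  case False
  then have "n + k = nat (- (int n - int k)) + 2 * n" by simp
  then have "(-1::'a) ^ (n + k) = (-1) ^ nat (- (int n - int k))"
    by (simp only: power_add power_mult) simp
  moreover have "rinv (-1::'a) = -1" by (rule rinv_eq) simp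
  ultimately show ?thesis using False unfolding ipow_def by simp
qed

definition inv_fact :: "nat \<Rightarrow> 'a::comm_ring_1" where
  "inv_fact n = rinv (of_nat (fact n))"

lemma inv_fact_0 [simp]: "inv_fact 0 = 1"
  unfolding inv_fact_def by (rule rinv_eq) simp

lemma inv_fact_binomial:
  assumes units: "\<And>n::nat. n \<ge> 1 \<Longrightarrow> of_nat n dvd (1::'a::comm_ring_1)" and "j \<le> n"
  shows "inv_fact n * of_nat (n choose j) = inv_fact j * (inv_fact (n - j) :: 'a)"
proof -
  have u1: "of_nat (fact j) dvd (1::'a)" and u2: "of_nat (fact (n - j)) dvd (1::'a)"
    and u3: "of_nat (n choose j) dvd (1::'a)"
    using \<open>j \<le> n\<close> by (auto intro!: units simp: Suc_leI)
  have "(of_nat (fact n) :: 'a) = of_nat (fact j) * of_nat (fact (n - j)) * of_nat (n choose j)"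
    using binomial_fact_lemma[OF \<open>j \<le> n\<close>] by (metis of_nat_mult)
  then have "inv_fact n = inv_fact j * inv_fact (n - j) * (rinv (of_nat (n choose j)) :: 'a)"
    unfolding inv_fact_def using u1 u2 u3 mult_dvd_mono[OF u1 u2] by (simp add: rinv_mult)
  moreover have "rinv (of_nat (n choose j)) * of_nat (n choose j) = (1::'a)"
    using rinv_unit[OF u3] by (simp add: mult.commute)
  ultimately show ?thesis by (simp add: mult.assoc)
qed

lemma inv_fact_mult_fact_pred:
  assumes units: "\<And>n::nat. n \<ge> 1 \<Longrightarrow> of_nat n dvd (1::'a::comm_ring_1)" and "m \<ge> 1"
  shows "inv_fact m * (of_nat (fact (m - 1)) * of_nat m) = (1::'a)"
proof -
  obtain m' where m: "m = Suc m'" using \<open>m \<ge> 1\<close> by (cases m) auto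
  have "of_nat (fact m) dvd (1::'a)" by (rule units) (simp add: Suc_leI)
  then have "inv_fact m * of_nat (fact m) = (1::'a)"
    unfolding inv_fact_def using rinv_unit by (simp add: mult.commute)
  then show ?thesis unfolding m by (simp add: algebra_simps)
qed

section \<open>The exponential formula\<close>

definition fiber_weight_sum :: "'k set \<Rightarrow> 'l set \<Rightarrow> ('k \<Rightarrow> nat \<Rightarrow> 'a::comm_ring_1) \<Rightarrow> 'a" where
  "fiber_weight_sum K L a = (\<Sum>\<theta>\<in>L \<rightarrow>\<^sub>E K. \<Prod>k\<in>K. a k (card {x\<in>L. \<theta> x = k}))"

lemma fiber_weight_sum_empty:
  "finite L \<Longrightarrow> fiber_weight_sum {} L a = (if L = {} then 1 else 0)"
  unfolding fiber_weight_sum_def by (simp add: card_PiE power_0_left)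

lemma fiber_weight_sum_bij:
  assumes f: "bij_betw f L' L"
  shows "fiber_weight_sum K L a = fiber_weight_sum K L' a"
  unfolding fiber_weight_sum_def
proof (rule sum.reindex_bij_witness[where j = "\<lambda>\<theta>. \<lambda>x\<in>L'. \<theta> (f x)"
      and i = "\<lambda>\<theta>. \<lambda>x\<in>L. \<theta> (inv_into L' f x)"])
  fix \<theta> assume \<theta>: "\<theta> \<in> L \<rightarrow>\<^sub>E K"
  show "(\<lambda>x\<in>L. (\<lambda>x\<in>L'. \<theta> (f x)) (inv_into L' f x)) = \<theta>"
    using \<theta> f by (auto simp: fun_eq_iff bij_betw_def f_inv_into_f inv_into_into)
  show "(\<lambda>x\<in>L'. \<theta> (f x)) \<in> L' \<rightarrow>\<^sub>E K"
    using \<theta> f by (auto simp: bij_betw_def)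
  have "card {x \<in> L'. \<theta> (f x) = k} = card {x \<in> L. \<theta> x = k}" for k
  proof (rule bij_betw_same_card[OF bij_betw_subset[OF f]])
    show "f ` {x \<in> L'. \<theta> (f x) = k} = {x \<in> L. \<theta> x = k}"
    proof
      show "{x \<in> L. \<theta> x = k} \<subseteq> f ` {x \<in> L'. \<theta> (f x) = k}"
        using f by (auto simp: bij_betw_def image_iff intro!: bexI[of _ "inv_into L' f _"] inv_into_into)
    qed (use f in \<open>auto simp: bij_betw_def\<close>)
  qed auto
  moreover have "{x \<in> L'. (\<lambda>x\<in>L'. \<theta> (f x)) x = k} = {x \<in> L'. \<theta> (f x) = k}" for k
    by auto
  ultimately show "(\<Prod>k\<in>K. a k (card {x \<in> L'. (\<lambda>x\<in>L'. \<theta> (f x)) x = k}))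
      = (\<Prod>k\<in>K. a k (card {x \<in> L. \<theta> x = k}))"
    by simp
next
  fix \<theta> assume \<theta>: "\<theta> \<in> L' \<rightarrow>\<^sub>E K"
  show "(\<lambda>x\<in>L'. (\<lambda>x\<in>L. \<theta> (inv_into L' f x)) (f x)) = \<theta>"
    using \<theta> f by (auto simp: fun_eq_iff bij_betw_def)
  show "(\<lambda>x\<in>L. \<theta> (inv_into L' f x)) \<in> L \<rightarrow>\<^sub>E K"
    using \<theta> f by (auto simp: bij_betw_def inv_into_into)
qed

lemma fiber_weight_sum_card:
  "finite L \<Longrightarrow> fiber_weight_sum K L a = fiber_weight_sum K {1..card L} a"
  using ex_bij_betw_nat_finite_1 fiber_weight_sum_bij by metis

lemma fiber_weight_sum_insert:
  assumes L: "finite L" and K: "finite K" and k: "k \<notin> K"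
  shows "fiber_weight_sum (insert k K) L a = (\<Sum>A\<in>Pow L. a k (card A) * fiber_weight_sum K (L - A) a)"
proof -
  let ?w = "\<lambda>L \<theta>. \<Prod>k'\<in>K. a k' (card {x\<in>L. \<theta> x = k'})"
  have "(\<Sum>A\<in>Pow L. a k (card A) * fiber_weight_sum K (L - A) a)
      = (\<Sum>(A, \<theta>)\<in>Sigma (Pow L) (\<lambda>A. (L - A) \<rightarrow>\<^sub>E K). a k (card A) * ?w (L - A) \<theta>)"
    unfolding fiber_weight_sum_def using L K
    by (simp add: sum_distrib_left sum.Sigma finite_PiE)
  also have "\<dots> = fiber_weight_sum (insert k K) L a"
    unfolding fiber_weight_sum_def
  proof (rule sum.reindex_bij_witness[where i = "\<lambda>\<theta>. ({x\<in>L. \<theta> x = k}, restrict \<theta> (L - {x\<in>L. \<theta> x = k}))"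
        and j = "\<lambda>(A, \<theta>). \<lambda>x\<in>L. if x \<in> A then k else \<theta> x"])
    fix \<theta> assume "\<theta> \<in> L \<rightarrow>\<^sub>E insert k K"
    then show "(case ({x\<in>L. \<theta> x = k}, restrict \<theta> (L - {x\<in>L. \<theta> x = k})) of
        (A, \<theta>) \<Rightarrow> \<lambda>x\<in>L. if x \<in> A then k else \<theta> x) = \<theta>"
      and "({x\<in>L. \<theta> x = k}, restrict \<theta> (L - {x\<in>L. \<theta> x = k})) \<in> Sigma (Pow L) (\<lambda>A. (L - A) \<rightarrow>\<^sub>E K)"
      by (auto simp: fun_eq_iff PiE_def extensional_def)
  next
    fix p assume p: "p \<in> Sigma (Pow L) (\<lambda>A. (L - A) \<rightarrow>\<^sub>E K)"
    then obtain A \<theta> where p_eq: "p = (A, \<theta>)" and A: "A \<subseteq> L" and \<theta>: "\<theta> \<in> (L - A) \<rightarrow>\<^sub>E K"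
      by auto
    define \<theta>' where "\<theta>' = (\<lambda>x\<in>L. if x \<in> A then k else \<theta> x)"
    have p_image: "(case p of (A, \<theta>) \<Rightarrow> \<lambda>x\<in>L. if x \<in> A then k else \<theta> x) = \<theta>'"
      unfolding p_eq \<theta>'_def by simp
    have fiber_k: "{x\<in>L. \<theta>' x = k} = A"
      using A k PiE_mem[OF \<theta>] by (auto simp: \<theta>'_def)
    have fiber_K: "{x\<in>L. \<theta>' x = k'} = {x\<in>L - A. \<theta> x = k'}" if "k' \<in> K" for k'
      using that k by (auto simp: \<theta>'_def)
    have "restrict \<theta>' (L - A) = restrict \<theta> (L - A)"
      by (rule restrict_ext) (simp add: \<theta>'_def)
    then have "restrict \<theta>' (L - A) = \<theta>"
      using \<theta> by simp
    then show "({x\<in>L. (case p of (A, \<theta>) \<Rightarrow> \<lambda>x\<in>L. if x \<in> A then k else \<theta> x) x = k},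
        restrict (case p of (A, \<theta>) \<Rightarrow> \<lambda>x\<in>L. if x \<in> A then k else \<theta> x)
          (L - {x\<in>L. (case p of (A, \<theta>) \<Rightarrow> \<lambda>x\<in>L. if x \<in> A then k else \<theta> x) x = k})) = p"
      unfolding p_image fiber_k unfolding p_eq by simp
    show "(case p of (A, \<theta>) \<Rightarrow> \<lambda>x\<in>L. if x \<in> A then k else \<theta> x) \<in> L \<rightarrow>\<^sub>E insert k K"
      unfolding p_image using PiE_mem[OF \<theta>] by (auto simp: \<theta>'_def)
    show "(\<Prod>k'\<in>insert k K. a k' (card {x\<in>L. (case p of (A, \<theta>) \<Rightarrow> \<lambda>x\<in>L. if x \<in> A then k else \<theta> x) x = k'}))
        = (case p of (A, \<theta>) \<Rightarrow> a k (card A) * ?w (L - A) \<theta>)"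
      unfolding p_image using K k fiber_k fiber_K unfolding p_eq by simp
  qed
  finally show ?thesis by simp
qed

lemma sum_Pow_card:
  assumes "finite L"
  shows "(\<Sum>A\<in>Pow L. f (card A)) = (\<Sum>j\<le>card L. of_nat (card L choose j) * f j)"
proof -
  have "(\<Sum>A\<in>Pow L. f (card A)) = (\<Sum>j\<le>card L. \<Sum>A\<in>{A\<in>Pow L. card A = j}. f (card A))"
    using assms by (intro sum.group[symmetric]) (auto intro: card_mono)
  also have "\<dots> = (\<Sum>j\<le>card L. of_nat (card L choose j) * f j)"
  proof (rule sum.cong[OF refl])
    fix j
    have "{A\<in>Pow L. card A = j} = {A. A \<subseteq> L \<and> card A = j}" by auto
    then show "(\<Sum>A\<in>{A\<in>Pow L. card A = j}. f (card A)) = of_nat (card L choose j) * f j"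
      using n_subsets[OF assms] by simp
  qed
  finally show ?thesis .
qed

lemma fiber_weight_sum_insert_interval:
  assumes K: "finite K" and k: "k \<notin> K"
  shows "fiber_weight_sum (insert k K) {1..n} a
    = (\<Sum>j\<le>n. of_nat (n choose j) * (a k j * fiber_weight_sum K {1..n - j} a))"
proof -
  have "fiber_weight_sum (insert k K) {1..n} a
      = (\<Sum>A\<in>Pow {1..n}. a k (card A) * fiber_weight_sum K ({1..n} - A) a)"
    using K k by (intro fiber_weight_sum_insert) auto
  also have "\<dots> = (\<Sum>A\<in>Pow {1..n}. a k (card A) * fiber_weight_sum K {1..n - card A} a)"
  proof (intro sum.cong refl arg_cong2[where f = "(*)"])
    fix A assume "A \<in> Pow {1..n}"
    then show "fiber_weight_sum K ({1..n} - A) a = fiber_weight_sum K {1..n - card A} a"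
      by (subst fiber_weight_sum_card) (auto simp: card_Diff_subset finite_subset)
  qed
  also have "\<dots> = (\<Sum>j\<le>n. of_nat (n choose j) * (a k j * fiber_weight_sum K {1..n - j} a))"
    using sum_Pow_card[of "{1..n}" "\<lambda>j. a k j * fiber_weight_sum K {1..n - j} a"] by simp
  finally show ?thesis .
qed

lemma sum_atMost_triangle:
  fixes f :: "nat \<Rightarrow> nat \<Rightarrow> 'a::comm_monoid_add"
  shows "(\<Sum>n\<le>N. \<Sum>j\<le>n. f j (n - j)) = (\<Sum>j\<le>N. \<Sum>m\<le>N - j. f j m)"
proof -
  have "(\<Sum>n\<le>N. \<Sum>j\<le>n. f j (n - j)) = (\<Sum>(i, j)\<in>{(i, j). i + j \<le> N}. f i j)"
    by (rule sum.triangle_reindex_eq[symmetric])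
  also have "{(i, j). i + j \<le> N} = Sigma {..N} (\<lambda>i. {..N - i})" by auto
  finally show ?thesis by (simp add: sum.Sigma)
qed

lemma exponential_formula:
  fixes a :: "'k \<Rightarrow> nat \<Rightarrow> 'a::comm_ring_1"
  assumes units: "\<And>n::nat. n \<ge> 1 \<Longrightarrow> of_nat n dvd (1::'a)"
    and "finite K" and "\<And>k m. k \<in> K \<Longrightarrow> m > M \<Longrightarrow> a k m = 0" and "card K * M \<le> N"
  shows "(\<Sum>n\<le>N. inv_fact n * fiber_weight_sum K {1..n} a) = (\<Prod>k\<in>K. \<Sum>m\<le>M. inv_fact m * a k m)"
  using assms(2-)
proof (induction K arbitrary: N rule: finite_induct)
  case empty
  have "(\<Sum>n\<le>N. inv_fact n * fiber_weight_sum {} {1..n} a) = (\<Sum>n\<le>N. if n = 0 then 1 else 0)"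
    by (intro sum.cong) (auto simp: fiber_weight_sum_empty)
  then show ?case by simp
next
  case (insert k K)
  let ?e = "\<lambda>j. inv_fact j * a k j" and ?f = "\<lambda>m. inv_fact m * fiber_weight_sum K {1..m} a"
  have "(\<Sum>n\<le>N. inv_fact n * fiber_weight_sum (insert k K) {1..n} a) = (\<Sum>n\<le>N. \<Sum>j\<le>n. ?e j * ?f (n - j))"
  proof (rule sum.cong[OF refl])
    fix n
    have "inv_fact n * fiber_weight_sum (insert k K) {1..n} a
        = (\<Sum>j\<le>n. (inv_fact n * of_nat (n choose j)) * (a k j * fiber_weight_sum K {1..n - j} a))"
      unfolding fiber_weight_sum_insert_interval[OF insert.hyps] by (simp add: sum_distrib_left mult.assoc)
    also have "\<dots> = (\<Sum>j\<le>n. ?e j * ?f (n - j))"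
      by (intro sum.cong refl) (simp add: inv_fact_binomial[OF units] mult_ac)
    finally show "inv_fact n * fiber_weight_sum (insert k K) {1..n} a = (\<Sum>j\<le>n. ?e j * ?f (n - j))" .
  qed
  also have "\<dots> = (\<Sum>j\<le>N. \<Sum>m\<le>N - j. ?e j * ?f m)"
    by (rule sum_atMost_triangle)
  also have "\<dots> = (\<Sum>j\<le>M. ?e j * (\<Prod>k\<in>K. \<Sum>m\<le>M. inv_fact m * a k m))"
  proof (rule sum.mono_neutral_cong_right)
    show "{..M} \<subseteq> {..N}" using insert.hyps insert.prems(2) by simp
    show "\<forall>j\<in>{..N} - {..M}. (\<Sum>m\<le>N - j. ?e j * ?f m) = 0"
      using insert.prems by simp
    show "(\<Sum>m\<le>N - j. ?e j * ?f m) = ?e j * (\<Prod>k\<in>K. \<Sum>m\<le>M. inv_fact m * a k m)"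
      if "j \<in> {..M}" for j
    proof -
      have "card K * M \<le> N - j" using that insert by simp
      then have "(\<Sum>m\<le>N - j. ?f m) = (\<Prod>k\<in>K. \<Sum>m\<le>M. inv_fact m * a k m)"
        using insert.IH insert.prems(1) by simp
      then show ?thesis by (simp add: sum_distrib_left[symmetric])
    qed
  qed simp
  finally show ?case using insert.hyps by (simp add: sum_distrib_right)
qed

section \<open>Surjective lifts\<close>

(* fact m * Stirling p m is the number of surjections from a p-element set onto an m-element set. *)
definition num_surj :: "nat \<Rightarrow> nat \<Rightarrow> nat" where
  "num_surj p m = fact m * Stirling p m"

lemma num_surj_0_left: "num_surj 0 m = (if m = 0 then 1 else 0)"
  by (cases m) (simp_all add: num_surj_def)

lemma num_surj_Suc: "num_surj (Suc p) m = m * (num_surj p m + num_surj p (m - 1))"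
  by (cases m) (simp_all add: num_surj_def algebra_simps)

lemma num_surj_eq_0: "p < m \<Longrightarrow> num_surj p m = 0"
  by (simp add: num_surj_def)

definition surj_lifts :: "'q set \<Rightarrow> 'l set \<Rightarrow> ('l \<Rightarrow> 'k) \<Rightarrow> ('q \<Rightarrow> 'k) \<Rightarrow> ('q \<Rightarrow> 'l) set" where
  "surj_lifts Q L \<theta> h = {g \<in> Q \<rightarrow>\<^sub>E L. g ` Q = L \<and> (\<forall>q\<in>Q. \<theta> (g q) = h q)}"

lemma surj_liftsI:
  "g \<in> Q \<rightarrow>\<^sub>E L \<Longrightarrow> g ` Q = L \<Longrightarrow> (\<And>q. q \<in> Q \<Longrightarrow> \<theta> (g q) = h q) \<Longrightarrow> g \<in> surj_lifts Q L \<theta> h"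
  unfolding surj_lifts_def by blast

lemma finite_surj_lifts: "finite Q \<Longrightarrow> finite L \<Longrightarrow> finite (surj_lifts Q L \<theta> h)"
  by (rule finite_subset[of _ "Q \<rightarrow>\<^sub>E L"]) (auto simp: surj_lifts_def intro: finite_PiE)

lemma surj_lifts_eq_empty:
  assumes "finite Q" and "card Q < card L"
  shows "surj_lifts Q L \<theta> h = {}"
proof (rule equals0I)
  fix g assume "g \<in> surj_lifts Q L \<theta> h"
  then have "g ` Q = L" by (simp add: surj_lifts_def)
  then show False using card_image_le[OF assms(1), of g] assms(2) by simp
qed

lemma card_surj_lifts_fixing:
  assumes "a \<notin> Q" and "b \<in> L" and "\<theta> b = h a" and "finite Q" and "finite L"
  shows "card {g \<in> surj_lifts (insert a Q) L \<theta> h. g a = b}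
    = card (surj_lifts Q L \<theta> h) + card (surj_lifts Q (L - {b}) \<theta> h)"
proof -
  let ?S = "{g \<in> surj_lifts (insert a Q) L \<theta> h. g a = b}"
  let ?T = "surj_lifts Q L \<theta> h \<union> surj_lifts Q (L - {b}) \<theta> h"
  have restriction_in: "g(a := undefined) \<in> ?T" if "g \<in> ?S" for g
  proof -
    have g: "g \<in> insert a Q \<rightarrow>\<^sub>E L" "g ` insert a Q = L" "\<forall>q\<in>Q. \<theta> (g q) = h q" "g a = b"
      using that by (auto simp: surj_lifts_def simp del: image_insert)
    have image: "g(a := undefined) ` Q = g ` Q" using \<open>a \<notin> Q\<close> by auto
    have "g(a := undefined) \<in> Q \<rightarrow>\<^sub>E g ` Q"
      using fun_upd_in_PiE[OF \<open>a \<notin> Q\<close> g(1)] \<open>a \<notin> Q\<close> by (auto simp: PiE_iff)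
    moreover have "\<forall>q\<in>Q. \<theta> ((g(a := undefined)) q) = h q" using g(3) \<open>a \<notin> Q\<close> by auto
    ultimately have lift: "g(a := undefined) \<in> surj_lifts Q (g ` Q) \<theta> h"
      unfolding surj_lifts_def mem_Collect_eq image by blast
    have "insert b (g ` Q) = L" using g(2,4) by simp
    then have "g ` Q = L \<or> g ` Q = L - {b}" by (cases "b \<in> g ` Q") auto
    with lift show ?thesis by (metis UnI1 UnI2)
  qed
  have extension_in: "g(a := b) \<in> ?S" if "g \<in> ?T" for g
  proof -
    have g: "g \<in> Q \<rightarrow>\<^sub>E L" "g ` Q = L \<or> g ` Q = L - {b}" "\<forall>q\<in>Q. \<theta> (g q) = h q"
      using that by (auto simp: surj_lifts_def)
    have "g(a := b) \<in> insert a Q \<rightarrow>\<^sub>E L" using PiE_fun_upd[OF \<open>b \<in> L\<close> g(1)] .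
    moreover have "g(a := b) ` insert a Q = L" using g(2) \<open>a \<notin> Q\<close> \<open>b \<in> L\<close> by auto
    moreover have "\<theta> ((g(a := b)) q) = h q" if "q \<in> insert a Q" for q
      using that g(3) \<open>a \<notin> Q\<close> \<open>\<theta> b = h a\<close> by auto
    ultimately have "g(a := b) \<in> surj_lifts (insert a Q) L \<theta> h" by (rule surj_liftsI)
    then show ?thesis by (simp only: mem_Collect_eq fun_upd_same simp_thms)
  qed
  have "bij_betw (\<lambda>g. g(a := undefined)) ?S ?T"
  proof (rule bij_betw_byWitness[where f' = "\<lambda>g. g(a := b)"])
    show "\<forall>g\<in>?T. (g(a := b))(a := undefined) = g"
    proof
      fix g assume "g \<in> ?T"
      then have "g \<in> Q \<rightarrow>\<^sub>E L \<or> g \<in> Q \<rightarrow>\<^sub>E (L - {b})" by (auto simp: surj_lifts_def)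
      then have "g a = undefined" using \<open>a \<notin> Q\<close> by (metis PiE_arb)
      then show "(g(a := b))(a := undefined) = g" by auto
    qed
    show "\<forall>g\<in>?S. (g(a := undefined))(a := b) = g" by auto
    show "(\<lambda>g. g(a := undefined)) ` ?S \<subseteq> ?T" using restriction_in by blast
    show "(\<lambda>g. g(a := b)) ` ?T \<subseteq> ?S" using extension_in by blast
  qed
  moreover have "surj_lifts Q L \<theta> h \<inter> surj_lifts Q (L - {b}) \<theta> h = {}"
    using \<open>b \<in> L\<close> by (auto simp: surj_lifts_def)
  ultimately show ?thesis
    using assms(4,5) by (simp add: bij_betw_same_card card_Un_disjoint finite_surj_lifts)
qed

lemma card_surj_lifts_insert:
  assumes "a \<notin> Q" and "finite Q" and "finite L"
  shows "card (surj_lifts (insert a Q) L \<theta> h)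
    = (\<Sum>b\<in>{b\<in>L. \<theta> b = h a}. card (surj_lifts Q L \<theta> h) + card (surj_lifts Q (L - {b}) \<theta> h))"
proof -
  have "finite (surj_lifts (insert a Q) L \<theta> h)" using assms by (simp add: finite_surj_lifts)
  then have "(\<Sum>b\<in>{b\<in>L. \<theta> b = h a}. \<Sum>g\<in>{g \<in> surj_lifts (insert a Q) L \<theta> h. g a = b}. 1::nat)
      = (\<Sum>g\<in>surj_lifts (insert a Q) L \<theta> h. 1)"
    using assms by (intro sum.group) (auto simp: surj_lifts_def)
  then show ?thesis using assms by (simp add: card_surj_lifts_fixing)
qed

lemma prod_if_01:
  "finite K \<Longrightarrow> (\<Prod>k\<in>K. if P k then 1 else 0) = (if \<forall>k\<in>K. P k then 1 else (0::'a::comm_semiring_1))"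
  by (induction K rule: finite_induct) auto

lemma card_surj_lifts:
  assumes "finite Q" and "finite K" and "h ` Q \<subseteq> K" and "finite L" and "\<theta> ` L \<subseteq> K"
  shows "card (surj_lifts Q L \<theta> h)
    = (\<Prod>k\<in>K. num_surj (card {q\<in>Q. h q = k}) (card {x\<in>L. \<theta> x = k}))"
  using assms(1,3-)
proof (induction Q arbitrary: L rule: finite_induct)
  case empty
  have "surj_lifts {} L \<theta> h = (if L = {} then {\<lambda>x. undefined} else {})"
    by (auto simp: surj_lifts_def)
  then have "card (surj_lifts {} L \<theta> h) = (\<Prod>k\<in>K. if {x\<in>L. \<theta> x = k} = {} then 1 else 0)"
    using assms(2) empty.prems by (auto simp: prod_if_01)
  also have "\<dots> = (\<Prod>k\<in>K. num_surj (card {q\<in>{}. h q = k}) (card {x\<in>L. \<theta> x = k}))"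
    using empty.prems by (intro prod.cong) (auto simp: num_surj_0_left)
  finally show ?case .
next
  case (insert a Q)
  define k\<^sub>0 where "k\<^sub>0 = h a"
  have k\<^sub>0: "k\<^sub>0 \<in> K" and hQ: "h ` Q \<subseteq> K" using insert.prems unfolding k\<^sub>0_def by auto
  define p where "p = card {q\<in>Q. h q = k\<^sub>0}"
  define m where "m = card {x\<in>L. \<theta> x = k\<^sub>0}"
  define R where "R = (\<Prod>k\<in>K - {k\<^sub>0}. num_surj (card {q\<in>Q. h q = k}) (card {x\<in>L. \<theta> x = k}))"
  have IH: "card (surj_lifts Q L' \<theta> h) = num_surj p (card {x\<in>L'. \<theta> x = k\<^sub>0}) * R"
    if L': "finite L'" "\<theta> ` L' \<subseteq> K"
      and fibers: "\<And>k. k \<noteq> k\<^sub>0 \<Longrightarrow> {x\<in>L'. \<theta> x = k} = {x\<in>L. \<theta> x = k}" for L'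
  proof -
    have "card (surj_lifts Q L' \<theta> h)
        = (\<Prod>k\<in>K. num_surj (card {q\<in>Q. h q = k}) (card {x\<in>L'. \<theta> x = k}))"
      using insert.IH[OF hQ L'] .
    also have "\<dots> = num_surj p (card {x\<in>L'. \<theta> x = k\<^sub>0})
        * (\<Prod>k\<in>K - {k\<^sub>0}. num_surj (card {q\<in>Q. h q = k}) (card {x\<in>L'. \<theta> x = k}))"
      unfolding p_def by (rule prod.remove[OF assms(2) k\<^sub>0])
    also have "(\<Prod>k\<in>K - {k\<^sub>0}. num_surj (card {q\<in>Q. h q = k}) (card {x\<in>L'. \<theta> x = k})) = R"
      unfolding R_def using fibers by (intro prod.cong) auto
    finally show ?thesis .
  qed
  have "card (surj_lifts (insert a Q) L \<theta> h)
      = (\<Sum>b\<in>{b\<in>L. \<theta> b = k\<^sub>0}. card (surj_lifts Q L \<theta> h) + card (surj_lifts Q (L - {b}) \<theta> h))"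
    unfolding k\<^sub>0_def using insert by (intro card_surj_lifts_insert) auto
  also have "\<dots> = (\<Sum>b\<in>{b\<in>L. \<theta> b = k\<^sub>0}. num_surj p m * R + num_surj p (m - 1) * R)"
  proof (rule sum.cong[OF refl])
    fix b assume b: "b \<in> {b\<in>L. \<theta> b = k\<^sub>0}"
    have "{x\<in>L - {b}. \<theta> x = k\<^sub>0} = {x\<in>L. \<theta> x = k\<^sub>0} - {b}" by auto
    then have "card {x\<in>L - {b}. \<theta> x = k\<^sub>0} = m - 1"
      using b unfolding m_def by (simp add: card_Diff_singleton)
    moreover have "card (surj_lifts Q (L - {b}) \<theta> h) = num_surj p (card {x\<in>L - {b}. \<theta> x = k\<^sub>0}) * R"
      using insert.prems b by (intro IH) auto
    moreover have "card (surj_lifts Q L \<theta> h) = num_surj p m * R"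
      unfolding m_def using insert.prems by (intro IH) auto
    ultimately show "card (surj_lifts Q L \<theta> h) + card (surj_lifts Q (L - {b}) \<theta> h)
        = num_surj p m * R + num_surj p (m - 1) * R" by simp
  qed
  also have "\<dots> = m * (num_surj p m + num_surj p (m - 1)) * R"
    by (simp add: m_def algebra_simps)
  also have "\<dots> = num_surj (card {q\<in>insert a Q. h q = k\<^sub>0}) m * R"
  proof -
    have "{q\<in>insert a Q. h q = k\<^sub>0} = insert a {q\<in>Q. h q = k\<^sub>0}" by (auto simp: k\<^sub>0_def)
    then show ?thesis using insert.hyps by (simp add: p_def num_surj_Suc)
  qed
  also have "\<dots> = (\<Prod>k\<in>K. num_surj (card {q\<in>insert a Q. h q = k}) (card {x\<in>L. \<theta> x = k}))"
  proof -
    have "{q\<in>insert a Q. h q = k} = {q\<in>Q. h q = k}" if "k \<noteq> k\<^sub>0" for k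
      using that by (auto simp: k\<^sub>0_def)
    then have "(\<Prod>k\<in>K - {k\<^sub>0}. num_surj (card {q\<in>insert a Q. h q = k}) (card {x\<in>L. \<theta> x = k})) = R"
      unfolding R_def by (intro prod.cong) auto
    then show ?thesis unfolding m_def by (simp add: prod.remove[OF assms(2) k\<^sub>0])
  qed
  finally show ?case .
qed

section \<open>Only injective maps survive the alternating sum\<close>

lemma sum_alternating_telescope:
  fixes f :: "nat \<Rightarrow> 'a::comm_ring_1"
  shows "(\<Sum>m=1..M. (-1) ^ (m + 1) * (f m + f (m - 1))) = (-1) ^ (M + 1) * f M + f 0"
  by (induction M) (simp_all add: algebra_simps)

definition signed_surj_weight :: "nat \<Rightarrow> nat \<Rightarrow> 'a::comm_ring_1" where
  "signed_surj_weight p m = (-1) ^ (m + 1) * of_nat (fact (m - 1)) * of_nat (num_surj p m)"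

lemma signed_surj_weight_eq_0: "p < m \<Longrightarrow> signed_surj_weight p m = 0"
  by (simp add: signed_surj_weight_def num_surj_eq_0)

lemma sum_signed_surj_weight:
  assumes units: "\<And>n::nat. n \<ge> 1 \<Longrightarrow> of_nat n dvd (1::'a::comm_ring_1)" and "p < M"
  shows "(\<Sum>m\<le>M. inv_fact m * signed_surj_weight (Suc p) m) = (if p = 0 then 1 else (0::'a))"
proof -
  have summand: "inv_fact m * signed_surj_weight (Suc p) m
      = (if m = 0 then 0 else (-1::'a) ^ (m + 1) * (of_nat (num_surj p m) + of_nat (num_surj p (m - 1))))"
    for m
  proof (cases "m = 0")
    case False
    then have "inv_fact m * signed_surj_weight (Suc p) m
        = (inv_fact m * (of_nat (fact (m - 1)) * of_nat m))
          * ((-1::'a) ^ (m + 1) * (of_nat (num_surj p m) + of_nat (num_surj p (m - 1))))"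
      unfolding signed_surj_weight_def num_surj_Suc by (simp add: mult_ac)
    then show ?thesis using False inv_fact_mult_fact_pred[OF units, of m] by simp
  qed (simp add: signed_surj_weight_def num_surj_def)
  have "(\<Sum>m\<le>M. inv_fact m * signed_surj_weight (Suc p) m)
      = (\<Sum>m=1..M. (-1::'a) ^ (m + 1) * (of_nat (num_surj p m) + of_nat (num_surj p (m - 1))))"
    unfolding summand by (rule sum.mono_neutral_cong_right) auto
  also have "\<dots> = (-1) ^ (M + 1) * of_nat (num_surj p M) + of_nat (num_surj p 0)"
    by (rule sum_alternating_telescope)
  also have "\<dots> = (if p = 0 then 1 else 0)"
    using \<open>p < M\<close> by (cases p) (simp_all add: num_surj_eq_0 num_surj_def)
  finally show ?thesis .
qed

lemma sum_card_fibers: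
  assumes "finite L" and "finite K" and "\<theta> ` L \<subseteq> K"
  shows "(\<Sum>k\<in>K. card {x\<in>L. \<theta> x = k}) = card L"
  using sum.group[OF assms, of "\<lambda>_. 1::nat"] by simp

lemma inj_on_iff_card_fibers:
  assumes "finite Q"
  shows "inj_on h Q \<longleftrightarrow> (\<forall>k\<in>h ` Q. card {q\<in>Q. h q = k} = 1)"
proof
  assume "inj_on h Q"
  then have "{q'\<in>Q. h q' = h q} = {q}" if "q \<in> Q" for q
    using that by (auto simp: inj_on_def)
  then show "\<forall>k\<in>h ` Q. card {q\<in>Q. h q = k} = 1" by auto
next
  assume fibers: "\<forall>k\<in>h ` Q. card {q\<in>Q. h q = k} = 1"
  show "inj_on h Q"
  proof (rule inj_onI)
    fix x y assume "x \<in> Q" "y \<in> Q" "h x = h y"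
    moreover obtain z where "{q\<in>Q. h q = h x} = {z}"
      using fibers \<open>x \<in> Q\<close> by (auto simp: card_1_singleton_iff)
    ultimately show "x = y" by (metis (mono_tags, lifting) mem_Collect_eq singletonD)
  qed
qed

lemma signed_surj_lifts_weight:
  assumes "finite Q" and "finite K" and "h ` Q \<subseteq> K" and "finite L" and "\<theta> \<in> L \<rightarrow>\<^sub>E K"
  shows "ipow (-1) (int (card L) - int (card K)) * (of_nat (card (surj_lifts Q L \<theta> h))
      * (\<Prod>k\<in>K. of_nat (fact (card {x\<in>L. \<theta> x = k} - 1))))
    = (\<Prod>k\<in>K. signed_surj_weight (card {q\<in>Q. h q = k}) (card {x\<in>L. \<theta> x = k}) :: 'a::comm_ring_1)"
proof -
  let ?m = "\<lambda>k. card {x\<in>L. \<theta> x = k}"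
  have "\<theta> ` L \<subseteq> K" using assms(5) by auto
  then have sum_fibers: "(\<Sum>k\<in>K. ?m k + 1) = card L + card K"
    unfolding sum.distrib using assms(2,4) by (simp add: sum_card_fibers)
  have "ipow (-1::'a) (int (card L) - int (card K)) = (-1) ^ (\<Sum>k\<in>K. ?m k + 1)"
    unfolding ipow_minus_one sum_fibers ..
  also have "\<dots> = (\<Prod>k\<in>K. (-1) ^ (?m k + 1))" by (rule power_sum)
  finally have "ipow (-1::'a) (int (card L) - int (card K)) = (\<Prod>k\<in>K. (-1) ^ (?m k + 1))" .
  moreover have "card (surj_lifts Q L \<theta> h) = (\<Prod>k\<in>K. num_surj (card {q\<in>Q. h q = k}) (?m k))"
    using assms \<open>\<theta> ` L \<subseteq> K\<close> by (intro card_surj_lifts)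
  moreover have "(\<Prod>k\<in>K. signed_surj_weight (card {q\<in>Q. h q = k}) (?m k) :: 'a)
      = (\<Prod>k\<in>K. (-1) ^ (?m k + 1)) * (\<Prod>k\<in>K. of_nat (fact (?m k - 1)))
        * of_nat (\<Prod>k\<in>K. num_surj (card {q\<in>Q. h q = k}) (?m k))"
    unfolding signed_surj_weight_def of_nat_prod by (simp only: prod.distrib)
  ultimately show ?thesis by (simp only: mult_ac)
qed

lemma fiber_weight_sum_surj_lifts:
  assumes "finite Q" and "finite K" and "h ` Q \<subseteq> K"
  shows "ipow (-1) (int n - int (card K)) * (\<Sum>\<theta>\<in>{1..n} \<rightarrow>\<^sub>E K.
      of_nat (card (surj_lifts Q {1..n} \<theta> h)) * (\<Prod>k\<in>K. of_nat (fact (card {x\<in>{1..n}. \<theta> x = k} - 1))))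
    = fiber_weight_sum K {1..n} (\<lambda>k. signed_surj_weight (card {q\<in>Q. h q = k}) :: nat \<Rightarrow> 'a::comm_ring_1)"
  unfolding fiber_weight_sum_def sum_distrib_left
  using signed_surj_lifts_weight[OF assms, of "{1..n}"] by (intro sum.cong refl) simp

lemma sum_surj_lifts_inversion:
  fixes h :: "'q \<Rightarrow> 'k"
  assumes units: "\<And>n::nat. n \<ge> 1 \<Longrightarrow> of_nat n dvd (1::'a::comm_ring_1)"
    and Q: "finite Q" and K: "finite K" and h: "h ` Q = K" and "card Q \<le> N"
  shows "(\<Sum>n\<le>N. ipow (-1) (int n - int (card K)) * inv_fact n *
      (\<Sum>\<theta>\<in>{1..n} \<rightarrow>\<^sub>E K. of_nat (card (surj_lifts Q {1..n} \<theta> h)) *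
        (\<Prod>k\<in>K. of_nat (fact (card {x\<in>{1..n}. \<theta> x = k} - 1)))))
    = (if inj_on h Q then 1 else (0::'a))"
proof -
  define M where "M = card Q"
  define a :: "'k \<Rightarrow> nat \<Rightarrow> 'a" where "a k = signed_surj_weight (card {q\<in>Q. h q = k})" for k
  define F :: "nat \<Rightarrow> 'a" where "F n = ipow (-1) (int n - int (card K)) * inv_fact n *
      (\<Sum>\<theta>\<in>{1..n} \<rightarrow>\<^sub>E K. of_nat (card (surj_lifts Q {1..n} \<theta> h)) *
        (\<Prod>k\<in>K. of_nat (fact (card {x\<in>{1..n}. \<theta> x = k} - 1))))" for n
  have fiber_le: "card {q\<in>Q. h q = k} \<le> M" for k
    unfolding M_def using Q by (intro card_mono) auto
  have F_eq: "F n = inv_fact n * fiber_weight_sum K {1..n} a" for n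
  proof -
    have "ipow (-1) (int n - int (card K)) * (\<Sum>\<theta>\<in>{1..n} \<rightarrow>\<^sub>E K.
        of_nat (card (surj_lifts Q {1..n} \<theta> h)) * (\<Prod>k\<in>K. of_nat (fact (card {x\<in>{1..n}. \<theta> x = k} - 1))))
      = fiber_weight_sum K {1..n} a"
      unfolding a_def using h by (intro fiber_weight_sum_surj_lifts[OF Q K]) simp
    then show ?thesis unfolding F_def by (simp add: mult_ac)
  qed
  have F_eq_0: "F n = 0" if "n > M" for n
  proof -
    have "surj_lifts Q {1..n} \<theta> h = {}" for \<theta>
      using that unfolding M_def by (intro surj_lifts_eq_empty[OF Q]) simp
    then show ?thesis unfolding F_def by simp
  qed
  have "(\<Sum>n\<le>N. F n) = (\<Sum>n\<le>max N (card K * M). F n)"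
    using F_eq_0 \<open>card Q \<le> N\<close> unfolding M_def by (intro sum.mono_neutral_left) auto
  also have "\<dots> = (\<Prod>k\<in>K. \<Sum>m\<le>M. inv_fact m * a k m)"
    unfolding F_eq
  proof (rule exponential_formula[OF units K])
    show "a k m = 0" if "m > M" for k m
      unfolding a_def using fiber_le[of k] that by (simp add: signed_surj_weight_eq_0)
  qed (auto intro: max.cobounded2)
  also have "\<dots> = (\<Prod>k\<in>K. if card {q\<in>Q. h q = k} = 1 then 1 else 0)"
  proof (rule prod.cong[OF refl])
    fix k assume "k \<in> K"
    then have "{q\<in>Q. h q = k} \<noteq> {}" using h by blast
    then have "card {q\<in>Q. h q = k} \<noteq> 0" using Q by simp
    then obtain p where p: "card {q\<in>Q. h q = k} = Suc p" using not0_implies_Suc by blast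
    then have "p < M" using fiber_le[of k] by simp
    then show "(\<Sum>m\<le>M. inv_fact m * a k m) = (if card {q\<in>Q. h q = k} = 1 then 1 else 0)"
      unfolding a_def p using sum_signed_surj_weight[OF units] by simp
  qed
  also have "\<dots> = (if inj_on h Q then 1 else 0)"
    using inj_on_iff_card_fibers[OF Q, of h] K h by (simp add: prod_if_01)
  finally show ?thesis unfolding F_def .
qed

section \<open>Connected components\<close>

definition component :: "'i set \<Rightarrow> 'j set \<Rightarrow> ('i \<times> 'j) set \<Rightarrow> 'i + 'j \<Rightarrow> ('i + 'j) set" where
  "component I J E v = {w \<in> I <+> J. (bip_adj E)\<^sup>*\<^sup>* v w}"

lemma graph_components_eq: "graph_components I J E = component I J E ` (I <+> J)"
  unfolding graph_components_def component_def ..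

lemma component_self: "v \<in> I <+> J \<Longrightarrow> v \<in> component I J E v"
  by (simp add: component_def)

lemma component_subset: "component I J E v \<subseteq> I <+> J"
  by (auto simp: component_def)

lemma component_eq:
  assumes "w \<in> component I J E v"
  shows "component I J E w = component I J E v"
proof -
  have "symp (bip_adj E)" by (auto simp: symp_def bip_adj_def)
  then have "(bip_adj E)\<^sup>*\<^sup>* w v" using assms by (auto simp: component_def dest: sympD[OF symp_rtranclp])
  then show ?thesis using assms by (auto simp: component_def intro: rtranclp_trans)
qed

lemma component_edge:
  assumes "(i, j) \<in> E" and "i \<in> I" and "j \<in> J"
  shows "component I J E (Inl i) = component I J E (Inr j)"
proof -
  have "bip_adj E (Inl i) (Inr j)" using assms(1) by (auto simp: bip_adj_def)
  then have "Inr j \<in> component I J E (Inl i)" using assms(3) by (auto simp: component_def)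
  then show ?thesis by (simp add: component_eq)
qed

lemma eq_on_component:
  assumes f: "\<forall>(i, j)\<in>E. f (Inl i) = f (Inr j)" and "w \<in> component I J E v"
  shows "f w = f v"
proof -
  have "(bip_adj E)\<^sup>*\<^sup>* v w" using assms(2) by (simp add: component_def)
  then show ?thesis
  proof (induction rule: rtranclp_induct)
    case (step y z)
    then have "f z = f y" using f by (auto simp: bip_adj_def)
    then show ?case using step.IH by simp
  qed simp
qed

lemma the_elem_image_component:
  assumes "\<forall>(i, j)\<in>E. f (Inl i) = f (Inr j)" and "v \<in> I <+> J"
  shows "the_elem (f ` component I J E v) = f v"
proof (rule the_elem_image_unique)
  show "component I J E v \<noteq> {}" using component_self[OF assms(2)] by blast
  show "f w = f v" if "w \<in> component I J E v" for w using eq_on_component[OF assms(1) that] .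
qed

definition vertex_maps :: "'i set \<Rightarrow> 'j set \<Rightarrow> ('i \<times> 'j) set \<Rightarrow> (('i + 'j) set \<Rightarrow> 'l)
    \<Rightarrow> ('i \<Rightarrow> 'l) \<times> ('j \<Rightarrow> 'l)" where
  "vertex_maps I J E g = (\<lambda>i\<in>I. g (component I J E (Inl i)), \<lambda>j\<in>J. g (component I J E (Inr j)))"

definition component_map :: "'i set \<Rightarrow> 'j set \<Rightarrow> ('i \<times> 'j) set \<Rightarrow> ('i \<Rightarrow> 'l) \<Rightarrow> ('j \<Rightarrow> 'l)
    \<Rightarrow> ('i + 'j) set \<Rightarrow> 'l" where
  "component_map I J E \<phi> \<psi> = (\<lambda>C\<in>graph_components I J E. the_elem (case_sum \<phi> \<psi> ` C))"

definition edge_compatible :: "'i set \<Rightarrow> 'j set \<Rightarrow> ('i \<times> 'j) set \<Rightarrow> 'l set \<Rightarrow> (('i \<Rightarrow> 'l) \<times> ('j \<Rightarrow> 'l)) set" where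
  "edge_compatible I J E L = {(\<phi>, \<psi>). \<phi> \<in> I \<rightarrow>\<^sub>E L \<and> \<psi> \<in> J \<rightarrow>\<^sub>E L \<and> (\<forall>(i, j)\<in>E. \<phi> i = \<psi> j)}"

lemma component_map_component:
  assumes "(\<phi>, \<psi>) \<in> edge_compatible I J E L" and "v \<in> I <+> J"
  shows "component_map I J E \<phi> \<psi> (component I J E v) = case_sum \<phi> \<psi> v"
  using assms by (auto simp: component_map_def edge_compatible_def graph_components_eq
      intro!: the_elem_image_component)

lemma vertex_maps_in:
  assumes "E \<subseteq> I \<times> J" and "g \<in> graph_components I J E \<rightarrow>\<^sub>E L"
  shows "vertex_maps I J E g \<in> edge_compatible I J E L"
  using assms component_edge[of _ _ E I J]
  by (fastforce simp: vertex_maps_def edge_compatible_def graph_components_eq)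

lemma component_map_in:
  assumes "(\<phi>, \<psi>) \<in> edge_compatible I J E L"
  shows "component_map I J E \<phi> \<psi> \<in> graph_components I J E \<rightarrow>\<^sub>E L"
proof -
  have "the_elem (case_sum \<phi> \<psi> ` C) \<in> L" if C: "C \<in> graph_components I J E" for C
  proof -
    obtain v where v: "v \<in> I <+> J" "C = component I J E v"
      using C by (auto simp: graph_components_eq)
    then have "the_elem (case_sum \<phi> \<psi> ` C) = case_sum \<phi> \<psi> v"
      using assms by (auto simp: edge_compatible_def intro!: the_elem_image_component)
    also have "\<dots> \<in> L" using assms v(1) by (auto simp: edge_compatible_def)
    finally show ?thesis .
  qed
  then show ?thesis unfolding component_map_def by (simp add: restrict_PiE_iff)
qed

lemma component_map_vertex_maps:
  assumes g: "g \<in> graph_components I J E \<rightarrow>\<^sub>E L"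
  shows "case_prod (component_map I J E) (vertex_maps I J E g) = g"
proof
  fix C
  show "case_prod (component_map I J E) (vertex_maps I J E g) C = g C"
  proof (cases "C \<in> graph_components I J E")
    case True
    then obtain v where v: "v \<in> I <+> J" "C = component I J E v" by (auto simp: graph_components_eq)
    have "case_sum (\<lambda>i\<in>I. g (component I J E (Inl i))) (\<lambda>j\<in>J. g (component I J E (Inr j))) w = g C"
      if "w \<in> C" for w
      using that v component_subset component_eq by fastforce
    moreover have "C \<noteq> {}" using v component_self by blast
    ultimately show ?thesis
      using True by (simp add: component_map_def vertex_maps_def the_elem_image_unique)
  next
    case False
    then show ?thesis using g by (simp add: component_map_def vertex_maps_def PiE_arb[OF g])
  qed
qed

lemma vertex_maps_component_map:
  assumes "(\<phi>, \<psi>) \<in> edge_compatible I J E L"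
  shows "vertex_maps I J E (component_map I J E \<phi> \<psi>) = (\<phi>, \<psi>)"
proof -
  have "\<phi> \<in> extensional I" "\<psi> \<in> extensional J" using assms by (auto simp: edge_compatible_def PiE_iff)
  then show ?thesis
    using component_map_component[OF assms InlI] component_map_component[OF assms InrI]
    by (auto simp: vertex_maps_def fun_eq_iff extensional_def)
qed

lemma bij_betw_vertex_maps:
  assumes "E \<subseteq> I \<times> J"
  shows "bij_betw (vertex_maps I J E) (graph_components I J E \<rightarrow>\<^sub>E L) (edge_compatible I J E L)"
proof (rule bij_betw_byWitness[where f' = "case_prod (component_map I J E)"])
  show "\<forall>p\<in>edge_compatible I J E L. vertex_maps I J E (case_prod (component_map I J E) p) = p"
    by (clarsimp simp: vertex_maps_component_map)
  show "case_prod (component_map I J E) ` edge_compatible I J E L \<subseteq> graph_components I J E \<rightarrow>\<^sub>E L"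
    by (clarsimp simp: component_map_in)
qed (use component_map_vertex_maps vertex_maps_in[OF assms] in blast)+

lemma vertex_maps_apply:
  assumes "vertex_maps I J E g = (\<phi>, \<psi>)" and "v \<in> I <+> J"
  shows "case_sum \<phi> \<psi> v = g (component I J E v)"
  using assms by (auto simp: vertex_maps_def)

lemma image_vertex_maps:
  assumes "vertex_maps I J E g = (\<phi>, \<psi>)"
  shows "\<phi> ` I \<union> \<psi> ` J = g ` graph_components I J E"
proof -
  have "\<phi> ` I \<union> \<psi> ` J = case_sum \<phi> \<psi> ` (I <+> J)" by force
  also have "\<dots> = (\<lambda>v. g (component I J E v)) ` (I <+> J)"
    using vertex_maps_apply[OF assms] by (rule image_cong[OF refl])
  finally show ?thesis by (simp add: graph_components_eq image_image)
qed

lemma fiber_sets_eq: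
  "Inl ` {i\<in>I. \<eta> i = k} \<union> Inr ` {j\<in>J. \<zeta> j = k} = {v \<in> I <+> J. case_sum \<eta> \<zeta> v = k}"
  by force

lemma inj_on_graph_components_iff:
  assumes h: "h ` graph_components I J E = K" and hv: "vertex_maps I J E h = (\<eta>, \<zeta>)"
  shows "inj_on h (graph_components I J E)
    \<longleftrightarrow> graph_components I J E = (\<lambda>k. Inl ` {i\<in>I. \<eta> i = k} \<union> Inr ` {j\<in>J. \<zeta> j = k}) ` K"
    (is "inj_on h ?Q \<longleftrightarrow> ?Q = ?F ` K")
proof -
  have F: "?F k = {v \<in> I <+> J. h (component I J E v) = k}" for k
    unfolding fiber_sets_eq by (intro Collect_cong conj_cong refl) (simp add: vertex_maps_apply[OF hv])
  have C_sub: "C \<subseteq> ?F (h C)" if "C \<in> ?Q" for C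
    using that component_subset component_eq unfolding F by (fastforce simp: graph_components_eq)
  show ?thesis
  proof
    assume inj: "inj_on h ?Q"
    have "?F (h C) = C" if C: "C \<in> ?Q" for C
    proof
      show "?F (h C) \<subseteq> C"
      proof
        fix v assume "v \<in> ?F (h C)"
        then have v: "v \<in> I <+> J" "h (component I J E v) = h C" unfolding F by auto
        then have "component I J E v = C" using inj C by (auto simp: graph_components_eq inj_on_def)
        then show "v \<in> C" using component_self[OF v(1), of E] by simp
      qed
    qed (rule C_sub[OF C])
    then have "(\<lambda>C. ?F (h C)) ` ?Q = (\<lambda>C. C) ` ?Q" by (intro image_cong) simp_all
    then show "?Q = ?F ` K" unfolding h[symmetric] image_image by simp
  next
    assume Q: "?Q = ?F ` K"
    have fiber: "?F (h C) = C" if C: "C \<in> ?Q" for C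
    proof -
      obtain k where k: "C = ?F k" using C Q by auto
      obtain v where v: "v \<in> I <+> J" "C = component I J E v" using C by (auto simp: graph_components_eq)
      then have "v \<in> ?F k" using component_self[OF v(1), of E] k by simp
      then have "h C = k" using v unfolding F by simp
      then show ?thesis using k by simp
    qed
    show "inj_on h ?Q"
    proof (rule inj_onI)
      fix C C' assume C: "C \<in> ?Q" "C' \<in> ?Q" and "h C = h C'"
      then have "C = ?F (h C')" using fiber[OF C(1)] by simp
      then show "C = C'" using fiber[OF C(2)] by simp
    qed
  qed
qed

section \<open>The coefficient of a fixed edge set\<close>

definition surj_triples :: "'i set \<Rightarrow> 'j set \<Rightarrow> ('i \<times> 'j) set \<Rightarrow> 'k set \<Rightarrow> 'l set
    \<Rightarrow> (('i \<Rightarrow> 'k) \<Rightarrow> ('j \<Rightarrow> 'k) \<Rightarrow> bool) \<Rightarrow> (('i \<Rightarrow> 'l) \<times> ('j \<Rightarrow> 'l) \<times> ('l \<Rightarrow> 'k)) set" where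
  "surj_triples I J E K L P = {(\<phi>, \<psi>, \<theta>). (\<phi>, \<psi>) \<in> edge_compatible I J E L \<and> \<theta> \<in> L \<rightarrow>\<^sub>E K
     \<and> \<phi> ` I \<union> \<psi> ` J = L \<and> P (\<lambda>i. \<theta> (\<phi> i)) (\<lambda>j. \<theta> (\<psi> j))}"

definition component_labelings :: "'i set \<Rightarrow> 'j set \<Rightarrow> 'k set \<Rightarrow> (('i \<Rightarrow> 'k) \<Rightarrow> ('j \<Rightarrow> 'k) \<Rightarrow> bool)
    \<Rightarrow> ('i \<times> 'j) set \<Rightarrow> (('i \<Rightarrow> 'k) \<times> ('j \<Rightarrow> 'k)) set" where
  "component_labelings I J K P E = {(\<eta>, \<zeta>). \<eta> \<in> I \<rightarrow>\<^sub>E K \<and> \<zeta> \<in> J \<rightarrow>\<^sub>E K \<and> P \<eta> \<zeta>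
     \<and> graph_components I J E = (\<lambda>k. Inl ` {i\<in>I. \<eta> i = k} \<union> Inr ` {j\<in>J. \<zeta> j = k}) ` K}"

lemma surj_triples_no_edges:
  "surj_triples I J {} K L P = {(\<phi>, \<psi>, \<theta>). \<phi> \<in> I \<rightarrow>\<^sub>E L \<and> \<psi> \<in> J \<rightarrow>\<^sub>E L \<and> \<theta> \<in> L \<rightarrow>\<^sub>E K
     \<and> \<phi> ` I \<union> \<psi> ` J = L \<and> P (\<lambda>i. \<theta> (\<phi> i)) (\<lambda>j. \<theta> (\<psi> j))}"
  by (auto simp: surj_triples_def edge_compatible_def)

lemma surj_triples_edges:
  "surj_triples I J E K L P
    = {t \<in> surj_triples I J {} K L P. case t of (\<phi>, \<psi>, \<theta>) \<Rightarrow> \<forall>(i, j)\<in>E. \<phi> i = \<psi> j}"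
  by (auto simp: surj_triples_def edge_compatible_def)

lemma finite_surj_triples:
  "finite I \<Longrightarrow> finite J \<Longrightarrow> finite K \<Longrightarrow> finite L \<Longrightarrow> finite (surj_triples I J E K L P)"
  by (rule finite_subset[of _ "(I \<rightarrow>\<^sub>E L) \<times> (J \<rightarrow>\<^sub>E L) \<times> (L \<rightarrow>\<^sub>E K)"])
    (auto simp: surj_triples_def edge_compatible_def finite_PiE)

lemma surj_triples_eq_empty:
  assumes "finite I" and "finite J" and "card I + card J < card L"
  shows "surj_triples I J E K L P = {}"
proof (rule equals0I, clarify)
  fix \<phi> \<psi> \<theta> assume "(\<phi>, \<psi>, \<theta>) \<in> surj_triples I J E K L P"
  then have "\<phi> ` I \<union> \<psi> ` J = L" by (simp add: surj_triples_def)
  then have "card L \<le> card I + card J"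
    using card_Un_le[of "\<phi> ` I" "\<psi> ` J"] card_image_le[OF assms(1), of \<phi>] card_image_le[OF assms(2), of \<psi>]
    by simp
  then show False using assms(3) by simp
qed

lemma card_bij_betw_Collect:
  assumes "bij_betw f A B" and "\<And>x. x \<in> A \<Longrightarrow> P x \<longleftrightarrow> Q (f x)"
  shows "card {x\<in>A. P x} = card {y\<in>B. Q y}"
proof (rule bij_betw_same_card[OF bij_betw_subset[OF assms(1)]])
  show "f ` {x\<in>A. P x} = {y\<in>B. Q y}"
    using assms by (auto simp: bij_betw_def)
qed auto

lemma image_eq_if_covering:
  assumes cover: "\<And>\<eta> \<zeta> k. P \<eta> \<zeta> \<Longrightarrow> k \<in> K \<Longrightarrow> (\<exists>i\<in>I. \<eta> i = k) \<or> (\<exists>j\<in>J. \<zeta> j = k)"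
    and h: "h \<in> graph_components I J E \<rightarrow>\<^sub>E K" and P: "case_prod P (vertex_maps I J E h)"
  shows "h ` graph_components I J E = K"
proof
  show "h ` graph_components I J E \<subseteq> K" using h by auto
  obtain \<eta> \<zeta> where v: "vertex_maps I J E h = (\<eta>, \<zeta>)" by fastforce
  show "K \<subseteq> h ` graph_components I J E"
  proof
    fix k assume "k \<in> K"
    then have "\<exists>v\<in>I <+> J. case_sum \<eta> \<zeta> v = k"
      using cover P v by (metis InlI InrI sum.case case_prod_conv)
    then obtain v where "v \<in> I <+> J" "case_sum \<eta> \<zeta> v = k" ..
    then show "k \<in> h ` graph_components I J E"
      using vertex_maps_apply[OF v] by (auto simp: graph_components_eq)
  qed
qed

lemma card_injective_component_maps:
  assumes E: "E \<subseteq> I \<times> J"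
    and cover: "\<And>\<eta> \<zeta> k. P \<eta> \<zeta> \<Longrightarrow> k \<in> K \<Longrightarrow> (\<exists>i\<in>I. \<eta> i = k) \<or> (\<exists>j\<in>J. \<zeta> j = k)"
  shows "card {h \<in> graph_components I J E \<rightarrow>\<^sub>E K. case_prod P (vertex_maps I J E h) \<and> inj_on h (graph_components I J E)}
    = card (component_labelings I J K P E)"
proof -
  let ?Q = "graph_components I J E"
  let ?F = "\<lambda>\<eta> \<zeta> k. Inl ` {i\<in>I. \<eta> i = k} \<union> Inr ` {j\<in>J. \<zeta> j = k}"
  let ?R = "\<lambda>\<eta> \<zeta>. P \<eta> \<zeta> \<and> ?Q = ?F \<eta> \<zeta> ` K"
  have "card {h \<in> ?Q \<rightarrow>\<^sub>E K. case_prod P (vertex_maps I J E h) \<and> inj_on h ?Q}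
      = card {p \<in> edge_compatible I J E K. case_prod ?R p}"
  proof (rule card_bij_betw_Collect[OF bij_betw_vertex_maps[OF E]])
    fix h assume h: "h \<in> ?Q \<rightarrow>\<^sub>E K"
    obtain \<eta> \<zeta> where v: "vertex_maps I J E h = (\<eta>, \<zeta>)" by fastforce
    have "h ` ?Q = K" if "P \<eta> \<zeta>" using image_eq_if_covering[OF cover h] v that by simp
    then show "(case_prod P (vertex_maps I J E h) \<and> inj_on h ?Q) = case_prod ?R (vertex_maps I J E h)"
      using inj_on_graph_components_iff[OF _ v] v by auto
  qed
  also have "{p \<in> edge_compatible I J E K. case_prod ?R p} = component_labelings I J K P E"
  proof -
    have "\<eta> i = \<zeta> j" if Q: "?Q = ?F \<eta> \<zeta> ` K" and ij: "(i, j) \<in> E" for \<eta> \<zeta> i j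
    proof -
      have "i \<in> I" "j \<in> J" using ij E by auto
      then have "component I J E (Inl i) \<in> ?Q" by (auto simp: graph_components_eq)
      then obtain k where k: "component I J E (Inl i) = ?F \<eta> \<zeta> k" using Q by auto
      have "Inl i \<in> component I J E (Inl i)" "Inr j \<in> component I J E (Inl i)"
        using component_self component_edge[OF ij] \<open>i \<in> I\<close> \<open>j \<in> J\<close> by (metis InlI InrI)+
      then show ?thesis unfolding k by auto
    qed
    then show ?thesis unfolding edge_compatible_def component_labelings_def by auto
  qed
  finally show ?thesis .
qed

context
  fixes I :: "'i set" and J :: "'j set" and E :: "('i \<times> 'j) set"
    and P :: "('i \<Rightarrow> 'k) \<Rightarrow> ('j \<Rightarrow> 'k) \<Rightarrow> bool"
  assumes E: "E \<subseteq> I \<times> J"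
    and P_cong: "\<And>\<eta> \<eta>' \<zeta> \<zeta>'. (\<And>i. i \<in> I \<Longrightarrow> \<eta> i = \<eta>' i) \<Longrightarrow> (\<And>j. j \<in> J \<Longrightarrow> \<zeta> j = \<zeta>' j)
      \<Longrightarrow> P \<eta> \<zeta> = P \<eta>' \<zeta>'"
begin

lemma P_vertex_maps_comp:
  assumes "vertex_maps I J E g = (\<phi>, \<psi>)"
    and "\<And>C. C \<in> graph_components I J E \<Longrightarrow> h C = \<theta> (g C)"
  shows "case_prod P (vertex_maps I J E h) = P (\<lambda>i. \<theta> (\<phi> i)) (\<lambda>j. \<theta> (\<psi> j))"
proof -
  have "h (component I J E v) = \<theta> (g (component I J E v))" if "v \<in> I <+> J" for v
    using assms(2) that by (simp add: graph_components_eq)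
  from this[OF InlI] this[OF InrI] show ?thesis
    using assms(1) unfolding vertex_maps_def by (auto intro!: P_cong)
qed

lemma sum_surj_triples_eq_sum_surj_lifts:
  "(\<Sum>(\<phi>, \<psi>, \<theta>)\<in>surj_triples I J E K L P. G \<theta>)
    = (\<Sum>(h, \<theta>, g)\<in>Sigma {h \<in> graph_components I J E \<rightarrow>\<^sub>E K. case_prod P (vertex_maps I J E h)}
        (\<lambda>h. Sigma (L \<rightarrow>\<^sub>E K) (\<lambda>\<theta>. surj_lifts (graph_components I J E) L \<theta> h)). G \<theta>)"
    (is "sum _ ?T = sum _ ?S")
proof (rule sum.reindex_bij_witness[where
      j = "\<lambda>(\<phi>, \<psi>, \<theta>). (\<lambda>C\<in>graph_components I J E. \<theta> (component_map I J E \<phi> \<psi> C), \<theta>, component_map I J E \<phi> \<psi>)"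
      and i = "\<lambda>(h, \<theta>, g). (fst (vertex_maps I J E g), snd (vertex_maps I J E g), \<theta>)"])
  fix t assume "t \<in> ?T"
  then obtain \<phi> \<psi> \<theta> where t: "t = (\<phi>, \<psi>, \<theta>)" and \<theta>: "\<theta> \<in> L \<rightarrow>\<^sub>E K"
    and img: "\<phi> ` I \<union> \<psi> ` J = L" and P: "P (\<lambda>i. \<theta> (\<phi> i)) (\<lambda>j. \<theta> (\<psi> j))"
    and compat: "(\<phi>, \<psi>) \<in> edge_compatible I J E L"
    by (auto simp: surj_triples_def)
  define g where "g = component_map I J E \<phi> \<psi>"
  define h where "h = (\<lambda>C\<in>graph_components I J E. \<theta> (g C))"
  have g: "g \<in> graph_components I J E \<rightarrow>\<^sub>E L" and vg: "vertex_maps I J E g = (\<phi>, \<psi>)"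
    unfolding g_def using compat by (simp_all add: component_map_in vertex_maps_component_map)
  show "(case case t of (\<phi>, \<psi>, \<theta>) \<Rightarrow> (\<lambda>C\<in>graph_components I J E. \<theta> (component_map I J E \<phi> \<psi> C),
      \<theta>, component_map I J E \<phi> \<psi>) of (h, \<theta>, g) \<Rightarrow> (fst (vertex_maps I J E g), snd (vertex_maps I J E g), \<theta>)) = t"
    unfolding t using vg by (simp add: g_def)
  have "h \<in> graph_components I J E \<rightarrow>\<^sub>E K" using g \<theta> unfolding h_def by auto
  moreover have "case_prod P (vertex_maps I J E h)"
    using P P_vertex_maps_comp[OF vg, of h \<theta>] by (simp add: h_def)
  moreover have "g \<in> surj_lifts (graph_components I J E) L \<theta> h"
    using g img image_vertex_maps[OF vg] by (intro surj_liftsI) (auto simp: h_def)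
  ultimately show "(case t of (\<phi>, \<psi>, \<theta>) \<Rightarrow> (\<lambda>C\<in>graph_components I J E. \<theta> (component_map I J E \<phi> \<psi> C),
      \<theta>, component_map I J E \<phi> \<psi>)) \<in> ?S"
    using \<theta> unfolding t by (simp add: g_def h_def)
  show "(case case t of (\<phi>, \<psi>, \<theta>) \<Rightarrow> (\<lambda>C\<in>graph_components I J E. \<theta> (component_map I J E \<phi> \<psi> C),
      \<theta>, component_map I J E \<phi> \<psi>) of (h, \<theta>, g) \<Rightarrow> G \<theta>) = (case t of (\<phi>, \<psi>, \<theta>) \<Rightarrow> G \<theta>)"
    unfolding t by simp
next
  fix s assume "s \<in> ?S"
  then obtain h \<theta> g where s: "s = (h, \<theta>, g)" and h: "h \<in> graph_components I J E \<rightarrow>\<^sub>E K"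
    and P: "case_prod P (vertex_maps I J E h)" and \<theta>: "\<theta> \<in> L \<rightarrow>\<^sub>E K"
    and "g \<in> surj_lifts (graph_components I J E) L \<theta> h"
    by auto
  then have g: "g \<in> graph_components I J E \<rightarrow>\<^sub>E L" "g ` graph_components I J E = L"
    and lift: "\<And>C. C \<in> graph_components I J E \<Longrightarrow> \<theta> (g C) = h C"
    by (simp_all add: surj_lifts_def)
  obtain \<phi> \<psi> where vg: "vertex_maps I J E g = (\<phi>, \<psi>)" by fastforce
  have compat: "(\<phi>, \<psi>) \<in> edge_compatible I J E L" using vertex_maps_in[OF E g(1)] vg by simp
  have "(\<lambda>C\<in>graph_components I J E. \<theta> (g C)) = h"
    using h lift by (auto simp: PiE_iff extensional_def)
  then show "(case case s of (h, \<theta>, g) \<Rightarrow> (fst (vertex_maps I J E g), snd (vertex_maps I J E g), \<theta>) of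
      (\<phi>, \<psi>, \<theta>) \<Rightarrow> (\<lambda>C\<in>graph_components I J E. \<theta> (component_map I J E \<phi> \<psi> C), \<theta>, component_map I J E \<phi> \<psi>)) = s"
    unfolding s using component_map_vertex_maps[OF g(1)] vg by simp
  have "P (\<lambda>i. \<theta> (\<phi> i)) (\<lambda>j. \<theta> (\<psi> j))"
    using P P_vertex_maps_comp[OF vg, of h \<theta>] lift by simp
  then show "(case s of (h, \<theta>, g) \<Rightarrow> (fst (vertex_maps I J E g), snd (vertex_maps I J E g), \<theta>)) \<in> ?T"
    using compat \<theta> image_vertex_maps[OF vg] g(2) unfolding s by (simp add: vg surj_triples_def)
qed

lemma sum_surj_triples_inversion:
  assumes units: "\<And>n::nat. n \<ge> 1 \<Longrightarrow> of_nat n dvd (1::'a::comm_ring_1)"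
    and cover: "\<And>\<eta> \<zeta> k. P \<eta> \<zeta> \<Longrightarrow> k \<in> K \<Longrightarrow> (\<exists>i\<in>I. \<eta> i = k) \<or> (\<exists>j\<in>J. \<zeta> j = k)"
    and fin: "finite I" "finite J" "finite K" and N: "card I + card J \<le> N"
  shows "(\<Sum>n\<le>N. ipow (-1) (int n - int (card K)) * inv_fact n *
      (\<Sum>(\<phi>, \<psi>, \<theta>)\<in>surj_triples I J E K {1..n} P. \<Prod>k\<in>K. of_nat (fact (card {l\<in>{1..n}. \<theta> l = k} - 1))))
    = (of_nat (card (component_labelings I J K P E)) :: 'a)"
proof -
  let ?Q = "graph_components I J E"
  define H where "H = {h \<in> ?Q \<rightarrow>\<^sub>E K. case_prod P (vertex_maps I J E h)}"
  define W :: "nat \<Rightarrow> (nat \<Rightarrow> 'k) \<Rightarrow> 'a" where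
    "W n \<theta> = (\<Prod>k\<in>K. of_nat (fact (card {l\<in>{1..n}. \<theta> l = k} - 1)))" for n \<theta>
  have fin_Q: "finite ?Q" using fin by (simp add: graph_components_eq)
  have "H \<subseteq> ?Q \<rightarrow>\<^sub>E K" unfolding H_def by blast
  then have fin_H: "finite H" by (rule finite_subset) (simp add: finite_PiE fin_Q fin(3))
  have card_Q: "card ?Q \<le> N"
    using card_image_le[of "I <+> J" "component I J E"] fin N by (simp add: graph_components_eq card_Plus)
  have triples: "(\<Sum>(\<phi>, \<psi>, \<theta>)\<in>surj_triples I J E K {1..n} P. W n \<theta>)
      = (\<Sum>h\<in>H. \<Sum>\<theta>\<in>{1..n} \<rightarrow>\<^sub>E K. of_nat (card (surj_lifts ?Q {1..n} \<theta> h)) * W n \<theta>)" for n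
    unfolding sum_surj_triples_eq_sum_surj_lifts H_def[symmetric] using fin_H fin_Q fin
    by (simp add: sum.Sigma[symmetric] finite_surj_lifts finite_PiE)
  have "(\<Sum>n\<le>N. ipow (-1) (int n - int (card K)) * inv_fact n *
      (\<Sum>(\<phi>, \<psi>, \<theta>)\<in>surj_triples I J E K {1..n} P. W n \<theta>))
    = (\<Sum>h\<in>H. \<Sum>n\<le>N. ipow (-1) (int n - int (card K)) * inv_fact n *
        (\<Sum>\<theta>\<in>{1..n} \<rightarrow>\<^sub>E K. of_nat (card (surj_lifts ?Q {1..n} \<theta> h)) * W n \<theta>))"
    unfolding triples by (simp add: sum_distrib_left sum.swap[of _ "{..N}"])
  also have "\<dots> = (\<Sum>h\<in>H. if inj_on h ?Q then 1 else 0)"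
    unfolding W_def using fin_Q fin(3) card_Q
    by (intro sum.cong refl sum_surj_lifts_inversion[OF units] image_eq_if_covering[OF cover])
      (auto simp: H_def)
  also have "\<dots> = of_nat (card {h \<in> H. inj_on h ?Q})"
    using fin_H by (simp add: sum.If_cases Collect_conj_eq Int_commute)
  also have "{h \<in> H. inj_on h ?Q} = {h \<in> ?Q \<rightarrow>\<^sub>E K. case_prod P (vertex_maps I J E h) \<and> inj_on h ?Q}"
    by (auto simp: H_def)
  also note card_injective_component_maps[OF E cover]
  finally show ?thesis unfolding W_def .
qed

end

section \<open>Expansion over edge sets\<close>

lemma prod_coincidences_expand:
  fixes w :: "'i \<Rightarrow> 'j \<Rightarrow> 'a::comm_ring_1"
  assumes "finite I" and "finite J"
  shows "(\<Prod>(i, j)\<in>{(i, j)\<in>I \<times> J. \<phi> i = \<psi> j}. w i j)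
    = (\<Sum>E\<in>{E\<in>Pow (I \<times> J). \<forall>(i, j)\<in>E. \<phi> i = \<psi> j}. \<Prod>(i, j)\<in>E. w i j - 1)"
proof -
  let ?S = "{(i, j)\<in>I \<times> J. \<phi> i = \<psi> j}"
  have "finite ?S" using assms by (auto intro: finite_subset[of _ "I \<times> J"])
  have "(\<Prod>(i, j)\<in>?S. w i j) = (\<Prod>q\<in>?S. (\<lambda>(i, j). w i j - 1) q + 1)"
    by (intro prod.cong) auto
  also have "\<dots> = (\<Sum>E\<in>Pow ?S. (\<Prod>(i, j)\<in>E. w i j - 1) * (\<Prod>q\<in>?S - E. 1))"
    by (rule prod_add[OF \<open>finite ?S\<close>])
  also have "Pow ?S = {E\<in>Pow (I \<times> J). \<forall>(i, j)\<in>E. \<phi> i = \<psi> j}" by auto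
  finally show ?thesis by simp
qed

lemma sum_surj_triples_coincidences:
  fixes w :: "'i \<Rightarrow> 'j \<Rightarrow> 'a::comm_ring_1" and W :: "('l \<Rightarrow> 'k) \<Rightarrow> 'a"
  assumes "finite I" and "finite J" and "finite K" and "finite L"
  shows "(\<Sum>(\<phi>, \<psi>, \<theta>)\<in>surj_triples I J {} K L P. W \<theta> * (\<Prod>(i, j)\<in>{(i, j)\<in>I \<times> J. \<phi> i = \<psi> j}. w i j))
    = (\<Sum>E\<in>Pow (I \<times> J). (\<Prod>(i, j)\<in>E. w i j - 1) * (\<Sum>(\<phi>, \<psi>, \<theta>)\<in>surj_triples I J E K L P. W \<theta>))"
proof -
  let ?T = "surj_triples I J {} K L P"
  let ?z = "\<lambda>E. \<Prod>(i, j)\<in>E. w i j - 1"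
  have "(\<Sum>(\<phi>, \<psi>, \<theta>)\<in>?T. W \<theta> * (\<Prod>(i, j)\<in>{(i, j)\<in>I \<times> J. \<phi> i = \<psi> j}. w i j))
      = (\<Sum>t\<in>?T. \<Sum>E\<in>{E\<in>Pow (I \<times> J). case t of (\<phi>, \<psi>, \<theta>) \<Rightarrow> \<forall>(i, j)\<in>E. \<phi> i = \<psi> j}.
          (case t of (\<phi>, \<psi>, \<theta>) \<Rightarrow> W \<theta>) * ?z E)"
  proof (intro sum.cong refl, clarify)
    fix \<phi> \<psi> \<theta>
    show "W \<theta> * (\<Prod>(i, j)\<in>{(i, j)\<in>I \<times> J. \<phi> i = \<psi> j}. w i j)
        = (\<Sum>E\<in>{E\<in>Pow (I \<times> J). \<forall>(i, j)\<in>E. \<phi> i = \<psi> j}. W \<theta> * ?z E)"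
      unfolding prod_coincidences_expand[OF assms(1,2)] by (simp add: sum_distrib_left)
  qed
  also have "\<dots> = (\<Sum>E\<in>Pow (I \<times> J). \<Sum>t\<in>{t\<in>?T. case t of (\<phi>, \<psi>, \<theta>) \<Rightarrow> \<forall>(i, j)\<in>E. \<phi> i = \<psi> j}.
      (case t of (\<phi>, \<psi>, \<theta>) \<Rightarrow> W \<theta>) * ?z E)"
    by (rule sum.swap_restrict) (simp_all add: assms finite_surj_triples)
  also have "\<dots> = (\<Sum>E\<in>Pow (I \<times> J). \<Sum>t\<in>surj_triples I J E K L P. (case t of (\<phi>, \<psi>, \<theta>) \<Rightarrow> W \<theta>) * ?z E)"
    by (simp only: surj_triples_edges[of I J _ K L P, symmetric])
  finally show ?thesis by (simp add: sum_distrib_left mult.commute split_beta)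
qed

lemma fsum_eq_sum_atMost:
  assumes "\<And>n. N < n \<Longrightarrow> f n = 0"
  shows "fsum f = (\<Sum>n\<le>N. f n)"
  unfolding fsum_def using assms by (intro sum.mono_neutral_left) (auto simp: not_less[symmetric])

lemma fsum_surj_triples_edge_expansion:
  fixes I :: "'i set" and J :: "'j set" and K :: "'k set"
    and P :: "('i \<Rightarrow> 'k) \<Rightarrow> ('j \<Rightarrow> 'k) \<Rightarrow> bool" and w :: "'i \<Rightarrow> 'j \<Rightarrow> 'a::comm_ring_1"
  assumes units: "\<And>n::nat. n \<ge> 1 \<Longrightarrow> of_nat n dvd (1::'a)"
    and P_cong: "\<And>\<eta> \<eta>' \<zeta> \<zeta>'. (\<And>i. i \<in> I \<Longrightarrow> \<eta> i = \<eta>' i) \<Longrightarrow> (\<And>j. j \<in> J \<Longrightarrow> \<zeta> j = \<zeta>' j)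
      \<Longrightarrow> P \<eta> \<zeta> = P \<eta>' \<zeta>'"
    and cover: "\<And>\<eta> \<zeta> k. P \<eta> \<zeta> \<Longrightarrow> k \<in> K \<Longrightarrow> (\<exists>i\<in>I. \<eta> i = k) \<or> (\<exists>j\<in>J. \<zeta> j = k)"
    and fin: "finite I" "finite J" "finite K"
  shows "fsum (\<lambda>n. ipow (-1) (int n - int (card K)) * inv_fact n *
      (\<Sum>(\<phi>, \<psi>, \<theta>)\<in>surj_triples I J {} K {1..n} P.
        (\<Prod>k\<in>K. of_nat (fact (card {l\<in>{1..n}. \<theta> l = k} - 1))) *
        (\<Prod>(i, j)\<in>{(i, j)\<in>I \<times> J. \<phi> i = \<psi> j}. w i j)))
    = (\<Sum>E\<in>Pow (I \<times> J). (\<Prod>(i, j)\<in>E. w i j - 1) * of_nat (card (component_labelings I J K P E)))"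
proof -
  define N where "N = card I + card J"
  define c :: "nat \<Rightarrow> 'a" where "c n = ipow (-1) (int n - int (card K)) * inv_fact n" for n
  define W :: "nat \<Rightarrow> (nat \<Rightarrow> 'k) \<Rightarrow> 'a" where
    "W n \<theta> = (\<Prod>k\<in>K. of_nat (fact (card {l\<in>{1..n}. \<theta> l = k} - 1)))" for n \<theta>
  define z where "z E = (\<Prod>(i, j)\<in>E. w i j - 1)" for E
  have "fsum (\<lambda>n. c n * (\<Sum>(\<phi>, \<psi>, \<theta>)\<in>surj_triples I J {} K {1..n} P.
      W n \<theta> * (\<Prod>(i, j)\<in>{(i, j)\<in>I \<times> J. \<phi> i = \<psi> j}. w i j)))
    = (\<Sum>n\<le>N. c n * (\<Sum>(\<phi>, \<psi>, \<theta>)\<in>surj_triples I J {} K {1..n} P.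
      W n \<theta> * (\<Prod>(i, j)\<in>{(i, j)\<in>I \<times> J. \<phi> i = \<psi> j}. w i j)))"
  proof (intro fsum_eq_sum_atMost)
    fix n assume "N < n"
    then have "surj_triples I J {} K {1..n} P = {}"
      unfolding N_def by (intro surj_triples_eq_empty[OF fin(1,2)]) simp
    then show "c n * (\<Sum>(\<phi>, \<psi>, \<theta>)\<in>surj_triples I J {} K {1..n} P.
        W n \<theta> * (\<Prod>(i, j)\<in>{(i, j)\<in>I \<times> J. \<phi> i = \<psi> j}. w i j)) = 0" by simp
  qed
  also have "\<dots> = (\<Sum>E\<in>Pow (I \<times> J). z E * (\<Sum>n\<le>N. c n * (\<Sum>(\<phi>, \<psi>, \<theta>)\<in>surj_triples I J E K {1..n} P. W n \<theta>)))"
    unfolding sum_surj_triples_coincidences[OF fin finite_atLeastAtMost] z_def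
    by (simp add: sum_distrib_left sum.swap[of _ "{..N}"] mult_ac)
  also have "\<dots> = (\<Sum>E\<in>Pow (I \<times> J). z E * of_nat (card (component_labelings I J K P E)))"
  proof (rule sum.cong[OF refl])
    fix E assume "E \<in> Pow (I \<times> J)"
    then have "E \<subseteq> I \<times> J" by simp
    from sum_surj_triples_inversion[where P = P, OF this P_cong units cover fin order.refl]
    show "z E * (\<Sum>n\<le>N. c n * (\<Sum>(\<phi>, \<psi>, \<theta>)\<in>surj_triples I J E K {1..n} P. W n \<theta>))
        = z E * of_nat (card (component_labelings I J K P E))"
      unfolding c_def W_def N_def by (rule arg_cong[where f = "\<lambda>x. z E * x"])
  qed
  finally show ?thesis unfolding c_def W_def z_def by (simp add: mult.assoc)
qed

lemma card_graph_components_fibers: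
  assumes gc: "graph_components I J E = (\<lambda>k. Inl ` {i\<in>I. \<eta> i = k} \<union> Inr ` {j\<in>J. \<zeta> j = k}) ` K"
    and cover: "\<And>k. k \<in> K \<Longrightarrow> (\<exists>i\<in>I. \<eta> i = k) \<or> (\<exists>j\<in>J. \<zeta> j = k)"
  shows "card (graph_components I J E) = card K"
  unfolding gc
proof (rule card_image, rule inj_onI)
  fix k k' assume "k \<in> K" and eq: "Inl ` {i\<in>I. \<eta> i = k} \<union> Inr ` {j\<in>J. \<zeta> j = k}
    = Inl ` {i\<in>I. \<eta> i = k'} \<union> Inr ` {j\<in>J. \<zeta> j = k'}"
  from cover[OF \<open>k \<in> K\<close>] show "k = k'"
  proof
    assume "\<exists>i\<in>I. \<eta> i = k"
    then obtain i where "i \<in> I" "\<eta> i = k" ..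
    then have "Inl i \<in> Inl ` {i\<in>I. \<eta> i = k'}" using eq by blast
    then show "k = k'" using \<open>\<eta> i = k\<close> by auto
  next
    assume "\<exists>j\<in>J. \<zeta> j = k"
    then obtain j where "j \<in> J" "\<zeta> j = k" ..
    then have "Inr j \<in> Inr ` {j\<in>J. \<zeta> j = k'}" using eq by blast
    then show "k = k'" using \<open>\<zeta> j = k\<close> by auto
  qed
qed

lemma ipow_betti1_mult_prod:
  fixes a :: "'a::comm_ring_1"
  assumes "a dvd 1" and "card (graph_components I J E) = card K"
  shows "ipow a (betti1 I J E) * (\<Prod>q\<in>E. f q * rinv a)
    = ipow a (int (card K) - int (card I) - int (card J)) * prod f E"
proof -
  have "ipow a (betti1 I J E) * (\<Prod>q\<in>E. f q * rinv a) = ipow a (betti1 I J E) * rinv a ^ card E * prod f E"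
    by (simp add: prod.distrib mult_ac)
  also have "ipow a (betti1 I J E) * rinv a ^ card E = ipow a (betti1 I J E - int (card E))"
    by (rule ipow_diff_of_nat[OF assms(1), symmetric])
  also have "betti1 I J E - int (card E) = int (card K) - int (card I) - int (card J)"
    using assms(2) by (simp add: betti1_def)
  finally show ?thesis .
qed

lemma sum_swap_edge_sets:
  assumes "finite V" and "finite I" and "finite J"
  shows "(\<Sum>(\<eta>, \<zeta>)\<in>V. \<Sum>E\<in>{E. E \<subseteq> I \<times> J \<and> R \<eta> \<zeta> E}. f E)
    = (\<Sum>E\<in>Pow (I \<times> J). of_nat (card {(\<eta>, \<zeta>). (\<eta>, \<zeta>) \<in> V \<and> R \<eta> \<zeta> E}) * f E)"
proof -
  have "(\<Sum>(\<eta>, \<zeta>)\<in>V. \<Sum>E\<in>{E. E \<subseteq> I \<times> J \<and> R \<eta> \<zeta> E}. f E)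
      = (\<Sum>p\<in>V. \<Sum>E\<in>{E\<in>Pow (I \<times> J). case_prod R p E}. f E)"
    by (simp add: split_beta)
  also have "\<dots> = (\<Sum>E\<in>Pow (I \<times> J). \<Sum>p\<in>{p\<in>V. case_prod R p E}. f E)"
    using assms by (intro sum.swap_restrict) auto
  also have "\<dots> = (\<Sum>E\<in>Pow (I \<times> J). of_nat (card {(\<eta>, \<zeta>). (\<eta>, \<zeta>) \<in> V \<and> R \<eta> \<zeta> E}) * f E)"
  proof (intro sum.cong refl)
    fix E
    have "{p\<in>V. case_prod R p E} = {(\<eta>, \<zeta>). (\<eta>, \<zeta>) \<in> V \<and> R \<eta> \<zeta> E}" by auto
    then show "(\<Sum>p\<in>{p\<in>V. case_prod R p E}. f E)
        = of_nat (card {(\<eta>, \<zeta>). (\<eta>, \<zeta>) \<in> V \<and> R \<eta> \<zeta> E}) * f E" by simp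
  qed
  finally show ?thesis .
qed

lemma sum_graphs_edge_expansion:
  fixes a :: "'a::comm_ring_1" and w :: "'i \<Rightarrow> 'j \<Rightarrow> 'a"
  assumes "a dvd 1"
    and cover: "\<And>\<eta> \<zeta> k. P \<eta> \<zeta> \<Longrightarrow> k \<in> K \<Longrightarrow> (\<exists>i\<in>I. \<eta> i = k) \<or> (\<exists>j\<in>J. \<zeta> j = k)"
    and fin: "finite I" "finite J" "finite K"
  shows "(\<Sum>(\<eta>, \<zeta>)\<in>{(\<eta>, \<zeta>). \<eta> \<in> I \<rightarrow>\<^sub>E K \<and> \<zeta> \<in> J \<rightarrow>\<^sub>E K \<and> P \<eta> \<zeta>}.
      \<Sum>E\<in>{E. E \<subseteq> I \<times> J \<and> graph_components I J E = (\<lambda>k. Inl ` {i\<in>I. \<eta> i = k} \<union> Inr ` {j\<in>J. \<zeta> j = k}) ` K}.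
        ipow a (betti1 I J E) * (\<Prod>(i, j)\<in>E. (w i j - 1) * rinv a))
    = (\<Sum>E\<in>Pow (I \<times> J). ipow a (int (card K) - int (card I) - int (card J)) * (\<Prod>(i, j)\<in>E. w i j - 1)
        * of_nat (card (component_labelings I J K P E)))"
proof -
  let ?V = "{(\<eta>, \<zeta>). \<eta> \<in> I \<rightarrow>\<^sub>E K \<and> \<zeta> \<in> J \<rightarrow>\<^sub>E K \<and> P \<eta> \<zeta>}"
  let ?A = "ipow a (int (card K) - int (card I) - int (card J))"
  have "finite ?V" using fin
    by (auto simp: finite_PiE intro: finite_subset[of _ "(I \<rightarrow>\<^sub>E K) \<times> (J \<rightarrow>\<^sub>E K)"])
  have "(\<Sum>(\<eta>, \<zeta>)\<in>?V.
      \<Sum>E\<in>{E. E \<subseteq> I \<times> J \<and> graph_components I J E = (\<lambda>k. Inl ` {i\<in>I. \<eta> i = k} \<union> Inr ` {j\<in>J. \<zeta> j = k}) ` K}.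
        ipow a (betti1 I J E) * (\<Prod>(i, j)\<in>E. (w i j - 1) * rinv a))
    = (\<Sum>(\<eta>, \<zeta>)\<in>?V.
      \<Sum>E\<in>{E. E \<subseteq> I \<times> J \<and> graph_components I J E = (\<lambda>k. Inl ` {i\<in>I. \<eta> i = k} \<union> Inr ` {j\<in>J. \<zeta> j = k}) ` K}.
        ?A * (\<Prod>(i, j)\<in>E. w i j - 1))"
    using ipow_betti1_mult_prod[OF \<open>a dvd 1\<close> card_graph_components_fibers[OF _ cover]]
    by (intro sum.cong refl) (auto simp: case_prod_unfold)
  also have "\<dots> = (\<Sum>E\<in>Pow (I \<times> J). ?A * (\<Prod>(i, j)\<in>E. w i j - 1) * of_nat (card (component_labelings I J K P E)))"
    unfolding component_labelings_def using \<open>finite ?V\<close> fin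
    by (subst sum_swap_edge_sets) (auto simp: mult.commute)
  finally show ?thesis .
qed

definition splits :: "'c set \<Rightarrow> ('c \<Rightarrow> 'g::comm_monoid_add) \<Rightarrow> 'i set \<Rightarrow> ('i \<Rightarrow> 'g) \<Rightarrow> 'j set \<Rightarrow> ('j \<Rightarrow> 'g)
    \<Rightarrow> ('i \<Rightarrow> 'c) \<Rightarrow> ('j \<Rightarrow> 'c) \<Rightarrow> bool" where
  "splits K \<mu> I \<kappa> J lam \<eta> \<zeta> \<longleftrightarrow>
     (\<forall>k\<in>K. \<mu> k = (\<Sum>i\<in>{i\<in>I. \<eta> i = k}. \<kappa> i) + (\<Sum>j\<in>{j\<in>J. \<zeta> j = k}. lam j))"

lemma splits_cong:
  assumes "\<And>i. i \<in> I \<Longrightarrow> \<eta> i = \<eta>' i" and "\<And>j. j \<in> J \<Longrightarrow> \<zeta> j = \<zeta>' j"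
  shows "splits K \<mu> I \<kappa> J lam \<eta> \<zeta> = splits K \<mu> I \<kappa> J lam \<eta>' \<zeta>'"
proof -
  have "{i\<in>I. \<eta> i = k} = {i\<in>I. \<eta>' i = k}" "{j\<in>J. \<zeta> j = k} = {j\<in>J. \<zeta>' j = k}" for k
    using assms by auto
  then show ?thesis unfolding splits_def by simp
qed

lemma splits_cover:
  assumes "splits K \<mu> I \<kappa> J lam \<eta> \<zeta>" and "k \<in> K" and "\<mu> k \<noteq> 0"
  shows "(\<exists>i\<in>I. \<eta> i = k) \<or> (\<exists>j\<in>J. \<zeta> j = k)"
proof (rule ccontr)
  assume "\<not> ?thesis"
  then have empty: "{i\<in>I. \<eta> i = k} = {}" "{j\<in>J. \<zeta> j = k} = {}" by auto
  have "\<mu> k = (\<Sum>i\<in>{i\<in>I. \<eta> i = k}. \<kappa> i) + (\<Sum>j\<in>{j\<in>J. \<zeta> j = k}. lam j)"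
    using assms(1,2) unfolding splits_def by blast
  then show False using assms(3) unfolding empty by simp
qed

theorem theorem6p9:
  fixes l :: "'a::comm_ring_1"
    and C :: "'g::ab_group_add set"
    and \<chi> :: "'g \<Rightarrow> 'g \<Rightarrow> int"
    and I :: "'i set" and J :: "'j set" and K :: "'c set"
    and \<kappa> :: "'i \<Rightarrow> 'g" and lam :: "'j \<Rightarrow> 'g" and \<mu> :: "'c \<Rightarrow> 'g"
  assumes Qalg: "\<And>n::nat. n \<ge> 1 \<Longrightarrow> of_nat n dvd (1::'a)"
    and l_unit: "l dvd 1"
    and lk_unit: "\<And>k::nat. k \<ge> 1 \<Longrightarrow> (l ^ k - 1) dvd 1"
    and C_nonzero: "0 \<notin> C"
    and C_add: "\<And>x y. x \<in> C \<Longrightarrow> y \<in> C \<Longrightarrow> x + y \<in> C"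
    and chi_add1: "\<And>a b c. \<chi> (a + b) c = \<chi> a c + \<chi> b c"
    and chi_add2: "\<And>a b c. \<chi> a (b + c) = \<chi> a b + \<chi> a c"
    and fin: "finite I" "finite J" "finite K"
    and kappa: "\<kappa> ` I \<subseteq> C" and lambda: "lam ` J \<subseteq> C" and mu: "\<mu> ` K \<subseteq> C"
  shows
   "ipow (l - 1) (int (card K) - int (card I) - int (card J)) * rinv (of_nat (aut_card K \<mu>)) *
      fsum (\<lambda>n. ipow (-1) (int n - int (card K)) * rinv (of_nat (fact n)) *
        (\<Sum>(\<phi>, \<psi>, \<theta>) \<in> {(\<phi>, \<psi>, \<theta>). \<phi> \<in> I \<rightarrow>\<^sub>E {1..n} \<and> \<psi> \<in> J \<rightarrow>\<^sub>E {1..n} \<and> \<theta> \<in> {1..n} \<rightarrow>\<^sub>E K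
              \<and> \<phi> ` I \<union> \<psi> ` J = {1..n}
              \<and> (\<forall>k\<in>K. \<mu> k = (\<Sum>i \<in> {i\<in>I. \<theta> (\<phi> i) = k}. \<kappa> i) + (\<Sum>j \<in> {j\<in>J. \<theta> (\<psi> j) = k}. lam j))}.
           (\<Prod>k\<in>K. of_nat (fact (card {l\<in>{1..n}. \<theta> l = k} - 1))) *
           (\<Prod>(i, j) \<in> {(i, j) \<in> I \<times> J. \<phi> i = \<psi> j}. ipow l (- \<chi> (lam j) (\<kappa> i)))))
    =
    rinv (of_nat (aut_card K \<mu>)) *
      (\<Sum>(\<eta>, \<zeta>) \<in> {(\<eta>, \<zeta>). \<eta> \<in> I \<rightarrow>\<^sub>E K \<and> \<zeta> \<in> J \<rightarrow>\<^sub>E K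
              \<and> (\<forall>k\<in>K. \<mu> k = (\<Sum>i \<in> {i\<in>I. \<eta> i = k}. \<kappa> i) + (\<Sum>j \<in> {j\<in>J. \<zeta> j = k}. lam j))}.
         (\<Sum>E \<in> {E. E \<subseteq> I \<times> J \<and>
                   graph_components I J E = (\<lambda>k. Inl ` {i\<in>I. \<eta> i = k} \<union> Inr ` {j\<in>J. \<zeta> j = k}) ` K}.
            ipow (l - 1) (betti1 I J E) *
            (\<Prod>(i, j) \<in> E. (ipow l (- \<chi> (lam j) (\<kappa> i)) - 1) * rinv (l - 1))))"
proof -
  have cover: "(\<exists>i\<in>I. \<eta> i = k) \<or> (\<exists>j\<in>J. \<zeta> j = k)"
    if "splits K \<mu> I \<kappa> J lam \<eta> \<zeta>" and "k \<in> K" for \<eta> \<zeta> k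
  proof -
    have "\<mu> k \<noteq> 0" using mu C_nonzero \<open>k \<in> K\<close> by auto
    then show ?thesis using splits_cover[OF that] by blast
  qed
  have "l - 1 dvd 1" using lk_unit[of 1] by simp
  note lhs = fsum_surj_triples_edge_expansion[where P = "splits K \<mu> I \<kappa> J lam"
      and w = "\<lambda>i j. ipow l (- \<chi> (lam j) (\<kappa> i))", OF Qalg splits_cong cover fin]
  note rhs = sum_graphs_edge_expansion[where P = "splits K \<mu> I \<kappa> J lam"
      and w = "\<lambda>i j. ipow l (- \<chi> (lam j) (\<kappa> i))", OF \<open>l - 1 dvd 1\<close> cover fin]
  show ?thesis
    using lhs rhs unfolding surj_triples_no_edges splits_def inv_fact_def
    by (simp add: sum_distrib_left mult_ac)
qed

end
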